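(* For a finite-space SSP game (as in the context) satisfying the Finite-Space SSP Game Model Assumption, there exist $(\mu^*,\nu^* )\in\Pi_{1,SR}\times\Pi_{2,SR}$ such that $J(i;\mu^*,\pi_2)\le J(i;\mu^*,\nu^* )\le J(i;\pi_1,\nu^* )$ for all $\pi_1\in\Pi_1$, $\pi_2\in\Pi_2$, $i\in S$. The value function of the game, $J^*(\cdot)=J(\cdot;\mu^*,\nu^* )$, is the unique solution of $J=TJ$. Moreover, any $\mu^*\in\Pi_{1,SR}$, $\nu^*\in\Pi_{2,SR}$ with $T_{\mu^*}J^*=TJ^*$ and $\tilde T_{\nu^*}J^*=TJ^*$ are optimal policies of player I and player II respectively, are essentially proper, and the pair $(\mu^*,\nu^* )$ is a non-prolonging pair of equilibrium policies.
   Context: Finite-space game: $S=\{1,\dots,n\}$, $S_o=S\cup\{0\}$, $0$ absorbing cost-free termination state. At $i\in S$, players I and II have finite control sets $U(i)$, $V(i)$. Under $(u,v)$ the state moves to $j\in S_o$ w.p. $p_{ij}(u,v)$ with transition cost $\hat g(i,u,v,j)$ (paid by player I to player II); $g(i,u,v)$ is the expected one-stage cost. $\Pi_1,\Pi_2$: history-dependent randomized policies (based on past states and both players' past controls). $J(i;\pi_1,\pi_2)=\liminf_{t\to\infty}E_{\pi_1\pi_2}[\sum_{k=0}^t\hat g(i_k,u_k,v_k,i_{k+1})\mid i_0=i]$. Player I minimizes $\sup_{\pi_2}J(i;\pi_1,\pi_2)$, player II maximizes $\inf_{\pi_1}J(i;\pi_1,\pi_2)$. $\bar U(i)=\mathcal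 P(U(i))$, $\bar V(i)=\mathcal P(V(i))$ (probability distributions). $\Pi_{1,SR}$ ($\Pi_{2,SR}$): stationary randomized policies $\mu=\{\mu(\cdot\mid i)\in\bar U(i)\}$ ($\nu=\{\nu(\cdot\mid i)\in\bar V(i)\}$). Operators on $\mathbb{R}^n$: $(TJ)(i)=\inf_{\rho\in\bar U(i)}\sup_{\sigma\in\bar V(i)}\sum_{u,v}\rho(u)\sigma(v)\big(g(i,u,v)+\sum_{j\in S}p_{ij}(u,v)J(j)\big)$; $(T_\mu J)(i)$ is the same with $\rho$ fixed to $\mu(\cdot\mid i)$ (sup over $\sigma$ only); $(\tilde T_\nu J)(i)$ is the same with $\sigma$ fixed to $\nu(\cdot\mid i)$ (inf over $\rho$ only). A pair of policies is prolonging if for some initial state the termination state is with positive probability never reached; otherwise non-prolonging. $\mu\in\Pi_{1,SR}$ is essentially proper if some $\nu\in\Pi_{2,SR}$ makes $(\mu,\nu)$ non-prolonging and every $\nu\in\Pi_{2,SR}$ with $(\mu,\nu)$ prolonging has $J(i;\mu,\nu)=-\infty$ for some $i$; $\nu\in\Pi_{2,SR}$ is essentially proper if some $\mu\in\Pi_{1,SR}$ makes $(\mu,\nu)$ non-prolonging and every $\mu$ with $(\mu,\nu)$ prolonging has $J(i;\mu,\nu)=+\infty$ for some $i$. Finite-Space SSP Game Model Assumption: (i) there is $\bar\mu\in\Pi_{1,SR}$ with $J(i;\bar\mu,\nu)<+\infty$ for all $\nu\in\Pi_{2,SR}$, all $i$; (ii) there is $\bar\nu\in\Pi_{2,SR}$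 with $J(i;\mu,\bar\nu)>-\infty$ for all $\mu\in\Pi_{1,SR}$, all $i$; (iii) every prolonging pair in $\Pi_{1,SR}\times\Pi_{2,SR}$ has $J(i;\mu,\nu)\in\{+\infty,-\infty\}$ for some $i$. *)

theory Defs
  imports "HOL-Probability.Probability"
begin

text \<open>States are natural numbers:
  S = {1..n}, the termination state is 0.  Controls of players I and II live in
  the types 'u and 'v, with admissible finite sets U(i), V(i).\<close>

record ('u,'v) ssp_game =
  nS :: nat
  Uc :: "nat \<Rightarrow> 'u set"
  Vc :: "nat \<Rightarrow> 'v set"
  tp :: "nat \<Rightarrow> 'u \<Rightarrow> 'v \<Rightarrow> nat \<Rightarrow> real"   (* p_ij(u,v) as tp i u v j *)
  tc :: "nat \<Rightarrow> 'u \<Rightarrow> 'v \<Rightarrow> nat \<Rightarrow> real"   (* \<hat>g(i,u,v,j) as tc i u v j *)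

definition St :: "('u,'v) ssp_game \<Rightarrow> nat set" where
  "St G = {1..nS G}"

definition So :: "('u,'v) ssp_game \<Rightarrow> nat set" where
  "So G = {0..nS G}"

definition wf_game :: "('u,'v) ssp_game \<Rightarrow> bool" where
  "wf_game G \<longleftrightarrow>
     (\<forall>i\<in>St G. finite (Uc G i) \<and> Uc G i \<noteq> {} \<and> finite (Vc G i) \<and> Vc G i \<noteq> {} \<and>
        (\<forall>u\<in>Uc G i. \<forall>v\<in>Vc G i.
            (\<forall>j\<in>So G. tp G i u v j \<ge> 0) \<and> (\<Sum>j\<in>So G. tp G i u v j) = 1))"

definition gcost :: "('u,'v) ssp_game \<Rightarrow> nat \<Rightarrow> 'u \<Rightarrow> 'v \<Rightarrow> real" where
  "gcost G i u v = (\<Sum>j\<in>So G. tp G i u v j * tc G i u v j)"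

text \<open>Histories: past states with both players' past controls (the current state is
  passed separately).\<close>
type_synonym ('u,'v) hist = "(nat \<times> 'u \<times> 'v) list"

definition Pol1 :: "('u,'v) ssp_game \<Rightarrow> (('u,'v) hist \<Rightarrow> nat \<Rightarrow> 'u pmf) set" where
  "Pol1 G = {\<pi>. \<forall>h. \<forall>i\<in>St G. set_pmf (\<pi> h i) \<subseteq> Uc G i}"

definition Pol2 :: "('u,'v) ssp_game \<Rightarrow> (('u,'v) hist \<Rightarrow> nat \<Rightarrow> 'v pmf) set" where
  "Pol2 G = {\<pi>. \<forall>h. \<forall>i\<in>St G. set_pmf (\<pi> h i) \<subseteq> Vc G i}"

definition SR1 :: "('u,'v) ssp_game \<Rightarrow> (nat \<Rightarrow> 'u pmf) set" where
  "SR1 G = {\<mu>. \<forall>i\<in>St G. set_pmf (\<mu> i) \<subseteq> Uc G i}"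

definition SR2 :: "('u,'v) ssp_game \<Rightarrow> (nat \<Rightarrow> 'v pmf) set" where
  "SR2 G = {\<nu>. \<forall>i\<in>St G. set_pmf (\<nu> i) \<subseteq> Vc G i}"

definition stat :: "(nat \<Rightarrow> 'a pmf) \<Rightarrow> ('u,'v) hist \<Rightarrow> nat \<Rightarrow> 'a pmf" where
  "stat \<mu> = (\<lambda>h i. \<mu> i)"

text \<open>State 0 is absorbing and cost-free.
  Hence E[\<Sum>k=0..t. \<hat>g(i_k,u_k,v_k,i_{k+1}) | i_0 = i] = costN G \<pi>1 \<pi>2 (Suc t) [] i.\<close>
primrec costN :: "('u,'v) ssp_game \<Rightarrow> (('u,'v) hist \<Rightarrow> nat \<Rightarrow> 'u pmf) \<Rightarrow>
    (('u,'v) hist \<Rightarrow> nat \<Rightarrow> 'v pmf) \<Rightarrow> nat \<Rightarrow> ('u,'v) hist \<Rightarrow> nat \<Rightarrow> real" where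
  "costN G \<pi>1 \<pi>2 0 h i = 0"
| "costN G \<pi>1 \<pi>2 (Suc m) h i =
     (if i = 0 then 0 else
       (\<Sum>u\<in>Uc G i. \<Sum>v\<in>Vc G i. pmf (\<pi>1 h i) u * pmf (\<pi>2 h i) v *
          (\<Sum>j\<in>So G. tp G i u v j * (tc G i u v j + costN G \<pi>1 \<pi>2 m (h @ [(i,u,v)]) j))))"

primrec survN :: "('u,'v) ssp_game \<Rightarrow> (('u,'v) hist \<Rightarrow> nat \<Rightarrow> 'u pmf) \<Rightarrow>
    (('u,'v) hist \<Rightarrow> nat \<Rightarrow> 'v pmf) \<Rightarrow> nat \<Rightarrow> ('u,'v) hist \<Rightarrow> nat \<Rightarrow> real" where
  "survN G \<pi>1 \<pi>2 0 h i = (if i = 0 then 0 else 1)"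
| "survN G \<pi>1 \<pi>2 (Suc m) h i =
     (if i = 0 then 0 else
       (\<Sum>u\<in>Uc G i. \<Sum>v\<in>Vc G i. pmf (\<pi>1 h i) u * pmf (\<pi>2 h i) v *
          (\<Sum>j\<in>So G. tp G i u v j * survN G \<pi>1 \<pi>2 m (h @ [(i,u,v)]) j)))"

definition Jc :: "('u,'v) ssp_game \<Rightarrow> (('u,'v) hist \<Rightarrow> nat \<Rightarrow> 'u pmf) \<Rightarrow>
    (('u,'v) hist \<Rightarrow> nat \<Rightarrow> 'v pmf) \<Rightarrow> nat \<Rightarrow> ereal" where
  "Jc G \<pi>1 \<pi>2 i = liminf (\<lambda>t. ereal (costN G \<pi>1 \<pi>2 (Suc t) [] i))"

text \<open>Since 0 is absorbing, the events {i_t \<noteq> 0} decrease, and the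
  probability of never reaching 0 is the limit (= infimum) of their probabilities.\<close>
definition prolonging :: "('u,'v) ssp_game \<Rightarrow> (('u,'v) hist \<Rightarrow> nat \<Rightarrow> 'u pmf) \<Rightarrow>
    (('u,'v) hist \<Rightarrow> nat \<Rightarrow> 'v pmf) \<Rightarrow> bool" where
  "prolonging G \<pi>1 \<pi>2 \<longleftrightarrow> (\<exists>i\<in>St G. (INF t. survN G \<pi>1 \<pi>2 t [] i) > 0)"

definition ess_proper1 :: "('u,'v) ssp_game \<Rightarrow> (nat \<Rightarrow> 'u pmf) \<Rightarrow> bool" where
  "ess_proper1 G \<mu> \<longleftrightarrow> \<mu> \<in> SR1 G \<and>
     (\<exists>\<nu>\<in>SR2 G. \<not> prolonging G (stat \<mu>) (stat \<nu>)) \<and>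
     (\<forall>\<nu>\<in>SR2 G. prolonging G (stat \<mu>) (stat \<nu>) \<longrightarrow>
         (\<exists>i\<in>St G. Jc G (stat \<mu>) (stat \<nu>) i = -\<infinity>))"

definition ess_proper2 :: "('u,'v) ssp_game \<Rightarrow> (nat \<Rightarrow> 'v pmf) \<Rightarrow> bool" where
  "ess_proper2 G \<nu> \<longleftrightarrow> \<nu> \<in> SR2 G \<and>
     (\<exists>\<mu>\<in>SR1 G. \<not> prolonging G (stat \<mu>) (stat \<nu>)) \<and>
     (\<forall>\<mu>\<in>SR1 G. prolonging G (stat \<mu>) (stat \<nu>) \<longrightarrow>
         (\<exists>i\<in>St G. Jc G (stat \<mu>) (stat \<nu>) i = \<infinity>))"

definition ssp_model_assumption :: "('u,'v) ssp_game \<Rightarrow> bool" where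
  "ssp_model_assumption G \<longleftrightarrow>
     (\<exists>\<mu>\<in>SR1 G. \<forall>\<nu>\<in>SR2 G. \<forall>i\<in>St G. Jc G (stat \<mu>) (stat \<nu>) i < \<infinity>) \<and>
     (\<exists>\<nu>\<in>SR2 G. \<forall>\<mu>\<in>SR1 G. \<forall>i\<in>St G. Jc G (stat \<mu>) (stat \<nu>) i > -\<infinity>) \<and>
     (\<forall>\<mu>\<in>SR1 G. \<forall>\<nu>\<in>SR2 G. prolonging G (stat \<mu>) (stat \<nu>) \<longrightarrow>
         (\<exists>i\<in>St G. Jc G (stat \<mu>) (stat \<nu>) i \<in> {\<infinity>, -\<infinity>}))"

text \<open>Operators T, T_\<mu>, \<tilde>T_\<nu> on real vectors (only the values on S matter).\<close>
definition Ubar :: "('u,'v) ssp_game \<Rightarrow> nat \<Rightarrow> 'u pmf set" where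
  "Ubar G i = {\<rho>. set_pmf \<rho> \<subseteq> Uc G i}"

definition Vbar :: "('u,'v) ssp_game \<Rightarrow> nat \<Rightarrow> 'v pmf set" where
  "Vbar G i = {\<sigma>. set_pmf \<sigma> \<subseteq> Vc G i}"

definition Qval :: "('u,'v) ssp_game \<Rightarrow> (nat \<Rightarrow> real) \<Rightarrow> nat \<Rightarrow> 'u pmf \<Rightarrow> 'v pmf \<Rightarrow> real" where
  "Qval G J i \<rho> \<sigma> = (\<Sum>u\<in>Uc G i. \<Sum>v\<in>Vc G i. pmf \<rho> u * pmf \<sigma> v *
       (gcost G i u v + (\<Sum>j\<in>St G. tp G i u v j * J j)))"

definition Top :: "('u,'v) ssp_game \<Rightarrow> (nat \<Rightarrow> real) \<Rightarrow> nat \<Rightarrow> real" where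
  "Top G J i = (INF \<rho>\<in>Ubar G i. SUP \<sigma>\<in>Vbar G i. Qval G J i \<rho> \<sigma>)"

definition Tmu :: "('u,'v) ssp_game \<Rightarrow> (nat \<Rightarrow> 'u pmf) \<Rightarrow> (nat \<Rightarrow> real) \<Rightarrow> nat \<Rightarrow> real" where
  "Tmu G \<mu> J i = (SUP \<sigma>\<in>Vbar G i. Qval G J i (\<mu> i) \<sigma>)"

definition Tnu :: "('u,'v) ssp_game \<Rightarrow> (nat \<Rightarrow> 'v pmf) \<Rightarrow> (nat \<Rightarrow> real) \<Rightarrow> nat \<Rightarrow> real" where
  "Tnu G \<nu> J i = (INF \<rho>\<in>Ubar G i. Qval G J i \<rho> (\<nu> i))"

definition equilibrium :: "('u,'v) ssp_game \<Rightarrow> (('u,'v) hist \<Rightarrow> nat \<Rightarrow> 'u pmf) \<Rightarrow>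
    (('u,'v) hist \<Rightarrow> nat \<Rightarrow> 'v pmf) \<Rightarrow> bool" where
  "equilibrium G \<pi>1 \<pi>2 \<longleftrightarrow>
     (\<forall>\<pi>1'\<in>Pol1 G. \<forall>\<pi>2'\<in>Pol2 G. \<forall>i\<in>St G.
        Jc G \<pi>1 \<pi>2' i \<le> Jc G \<pi>1 \<pi>2 i \<and> Jc G \<pi>1 \<pi>2 i \<le> Jc G \<pi>1' \<pi>2 i)"

definition optimal1 :: "('u,'v) ssp_game \<Rightarrow> (('u,'v) hist \<Rightarrow> nat \<Rightarrow> 'u pmf) \<Rightarrow> bool" where
  "optimal1 G \<pi>1 \<longleftrightarrow> (\<forall>i\<in>St G.
     (SUP \<pi>2\<in>Pol2 G. Jc G \<pi>1 \<pi>2 i) = (INF \<pi>1'\<in>Pol1 G. SUP \<pi>2\<in>Pol2 G. Jc G \<pi>1' \<pi>2 i))"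

definition optimal2 :: "('u,'v) ssp_game \<Rightarrow> (('u,'v) hist \<Rightarrow> nat \<Rightarrow> 'v pmf) \<Rightarrow> bool" where
  "optimal2 G \<pi>2 \<longleftrightarrow> (\<forall>i\<in>St G.
     (INF \<pi>1\<in>Pol1 G. Jc G \<pi>1 \<pi>2 i) = (SUP \<pi>2'\<in>Pol2 G. INF \<pi>1\<in>Pol1 G. Jc G \<pi>1 \<pi>2' i))"

end

theory Submission
  imports Defs
begin

text \<open>Fixing a stationary policy of one player leaves the other with a finite stochastic shortest
  path problem; since improper policies incur infinite cost, its Bellman operator (\<open>Tmu\<close> or
  \<open>Tnu\<close>) has a unique fixed point, to which value iteration converges from any start.  At each
  state \<open>Top G J\<close> is the value of the matrix game of one-stage payoffs, so by von Neumann's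
  minimax theorem it has a saddle point in mixed strategies; hence \<open>Tnu \<le> Top \<le> Tmu\<close>, and \<open>Top\<close>
  is monotone and nonexpansive.  The model assumption provides \<open>\<mu>\<close> and \<open>\<nu>\<close> for which value
  iteration for \<open>Top\<close>, started at the fixed point of \<open>Tmu G \<mu>\<close>, decreases and stays above the
  converging iterates of \<open>Tnu G \<nu>\<close>; its limit solves \<open>J = Top G J\<close>.  For policies that are greedy
  at this solution \<open>Js\<close>, the finite-horizon costs against an arbitrary history-dependent opponent
  are bounded by the iterates of \<open>Tmu\<close> resp.\ \<open>Tnu\<close> started at \<open>0\<close>, which converge to \<open>Js\<close>.  This
  gives the saddle inequalities, and optimality, essential properness and termination follow.\<close>

section \<open>Monotone and nonexpansive operators\<close>

definition monotone_op :: "nat set \<Rightarrow> ((nat \<Rightarrow> real) \<Rightarrow> nat \<Rightarrow> real) \<Rightarrow> bool" where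
  "monotone_op S F \<longleftrightarrow> (\<forall>J J'. (\<forall>j\<in>S. J j \<le> J' j) \<longrightarrow> (\<forall>i\<in>S. F J i \<le> F J' i))"

definition nonexpansive_op :: "nat set \<Rightarrow> ((nat \<Rightarrow> real) \<Rightarrow> nat \<Rightarrow> real) \<Rightarrow> bool" where
  "nonexpansive_op S F \<longleftrightarrow>
     (\<forall>J J' e. (\<forall>j\<in>S. \<bar>J j - J' j\<bar> \<le> e) \<longrightarrow> (\<forall>i\<in>S. \<bar>F J i - F J' i\<bar> \<le> e))"

lemma monotone_opI:
  assumes "\<And>J J' i. (\<And>j. j \<in> S \<Longrightarrow> J j \<le> J' j) \<Longrightarrow> i \<in> S \<Longrightarrow> F J i \<le> F J' i"
  shows "monotone_op S F"
  using assms unfolding monotone_op_def by blast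

lemma monotone_opD:
  "monotone_op S F \<Longrightarrow> (\<And>j. j \<in> S \<Longrightarrow> J j \<le> J' j) \<Longrightarrow> i \<in> S \<Longrightarrow> F J i \<le> F J' i"
  unfolding monotone_op_def by blast

lemma nonexpansive_opI:
  assumes "\<And>J J' e i. (\<And>j. j \<in> S \<Longrightarrow> \<bar>J j - J' j\<bar> \<le> e) \<Longrightarrow> i \<in> S \<Longrightarrow> \<bar>F J i - F J' i\<bar> \<le> e"
  shows "nonexpansive_op S F"
  using assms unfolding nonexpansive_op_def by blast

lemma nonexpansive_opD:
  "nonexpansive_op S F \<Longrightarrow> (\<And>j. j \<in> S \<Longrightarrow> \<bar>J j - J' j\<bar> \<le> e) \<Longrightarrow> i \<in> S \<Longrightarrow> \<bar>F J i - F J' i\<bar> \<le> e"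
  unfolding nonexpansive_op_def by blast

lemma monotone_op_cong:
  "monotone_op S F \<Longrightarrow> (\<And>j. j \<in> S \<Longrightarrow> J j = J' j) \<Longrightarrow> i \<in> S \<Longrightarrow> F J i = F J' i"
  by (rule antisym; erule monotone_opD; simp)

lemma monotone_op_funpow:
  "monotone_op S F \<Longrightarrow> (\<And>j. j \<in> S \<Longrightarrow> J j \<le> J' j) \<Longrightarrow> i \<in> S \<Longrightarrow> (F ^^ k) J i \<le> (F ^^ k) J' i"
proof (induction k arbitrary: i)
  case (Suc k)
  then show ?case by (simp add: monotone_opD)
qed simp

lemma funpow_le_self:
  assumes "monotone_op S F" "\<And>i. i \<in> S \<Longrightarrow> F J i \<le> J i" "i \<in> S"
  shows "(F ^^ k) J i \<le> J i"
  using assms(3)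
proof (induction k arbitrary: i)
  case (Suc k)
  have "(F ^^ Suc k) J i \<le> F J i" by (simp add: monotone_opD[OF assms(1) Suc.IH Suc.prems])
  also have "\<dots> \<le> J i" using assms(2) Suc.prems .
  finally show ?case .
qed simp

lemma funpow_ge_self:
  assumes "monotone_op S F" "\<And>i. i \<in> S \<Longrightarrow> J i \<le> F J i" "i \<in> S"
  shows "J i \<le> (F ^^ k) J i"
  using assms(3)
proof (induction k arbitrary: i)
  case (Suc k)
  have "J i \<le> F J i" using assms(2) Suc.prems .
  also have "\<dots> \<le> (F ^^ Suc k) J i" by (simp add: monotone_opD[OF assms(1) Suc.IH Suc.prems])
  finally show ?case .
qed simp

lemma funpow_fixpoint:
  assumes "monotone_op S F" "\<And>i. i \<in> S \<Longrightarrow> F J i = J i" "i \<in> S"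
  shows "(F ^^ k) J i = J i"
  using funpow_le_self[OF assms(1) _ assms(3)] funpow_ge_self[OF assms(1) _ assms(3)] assms(2)
  by (simp add: antisym)

lemma funpow_le_funpow:
  assumes "monotone_op S F" "\<And>J i. i \<in> S \<Longrightarrow> H J i \<le> F J i" "i \<in> S"
  shows "(H ^^ k) J i \<le> (F ^^ k) J i"
  using assms(3)
proof (induction k arbitrary: i)
  case (Suc k)
  have "(H ^^ Suc k) J i \<le> F ((H ^^ k) J) i" using assms(2) Suc.prems by simp
  also have "\<dots> \<le> (F ^^ Suc k) J i" by (simp add: monotone_opD[OF assms(1) Suc.IH Suc.prems])
  finally show ?case .
qed simp

lemma funpow_uminus_conj:
  assumes "monotone_op S H" "\<And>J i. i \<in> S \<Longrightarrow> F J i = - H (\<lambda>j. - J j) i" "i \<in> S"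
  shows "(F ^^ k) J i = - (H ^^ k) (\<lambda>j. - J j) i"
  using assms(3)
proof (induction k arbitrary: i)
  case (Suc k)
  have "(F ^^ Suc k) J i = - H (\<lambda>j. - (F ^^ k) J j) i" using assms(2) Suc.prems by simp
  also have "H (\<lambda>j. - (F ^^ k) J j) i = H ((H ^^ k) (\<lambda>j. - J j)) i"
    by (rule monotone_op_cong[OF assms(1) _ Suc.prems]) (simp add: Suc.IH)
  finally show ?case by simp
qed simp

lemma funpow_eq_on:
  assumes "monotone_op S F" "\<And>J i. i \<in> S \<Longrightarrow> H J i = F J i" "i \<in> S"
  shows "(H ^^ k) J i = (F ^^ k) J i"
  using assms(3)
proof (induction k arbitrary: i)
  case (Suc k)
  have "(H ^^ Suc k) J i = F ((H ^^ k) J) i" using assms(2) Suc.prems by simp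
  also have "\<dots> = (F ^^ Suc k) J i" by (simp add: monotone_op_cong[OF assms(1) Suc.IH Suc.prems])
  finally show ?case .
qed simp

lemma nonexpansive_op_tendsto:
  assumes "finite S" "nonexpansive_op S F" "\<And>j. j \<in> S \<Longrightarrow> (\<lambda>k. X k j) \<longlonglongrightarrow> L j" "i \<in> S"
  shows "(\<lambda>k. F (X k) i) \<longlonglongrightarrow> F L i"
proof -
  have "(\<lambda>k. \<Sum>j\<in>S. \<bar>X k j - L j\<bar>) \<longlonglongrightarrow> (\<Sum>j\<in>S. 0)"
    by (intro tendsto_sum tendsto_rabs_zero LIM_zero assms(3))
  then have dist: "(\<lambda>k. \<Sum>j\<in>S. \<bar>X k j - L j\<bar>) \<longlonglongrightarrow> 0" by simp
  have "\<bar>F (X k) i - F L i\<bar> \<le> (\<Sum>j\<in>S. \<bar>X k j - L j\<bar>)" for k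
    by (rule nonexpansive_opD[OF assms(2) _ assms(4)]) (intro member_le_sum assms(1); simp)
  then have "(\<lambda>k. F (X k) i - F L i) \<longlonglongrightarrow> 0"
    by (intro Lim_null_comparison[OF _ dist]) simp
  then show ?thesis by (rule LIM_zero_cancel)
qed

lemma nonexpansive_op_limit_fixpoint:
  assumes "finite S" "nonexpansive_op S F" "\<And>j. j \<in> S \<Longrightarrow> (\<lambda>k. (F ^^ k) J j) \<longlonglongrightarrow> L j" "i \<in> S"
  shows "F L i = L i"
proof -
  have "(\<lambda>k. F ((F ^^ k) J) i) \<longlonglongrightarrow> F L i" by (rule nonexpansive_op_tendsto[OF assms])
  moreover have "(\<lambda>k. F ((F ^^ k) J) i) \<longlonglongrightarrow> L i" using LIMSEQ_Suc[OF assms(3)[OF assms(4)]] by simp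
  ultimately show ?thesis using LIMSEQ_unique by blast
qed

lemma funpow_tendsto_fixpoint_if_increasing:
  assumes "finite S" "monotone_op S F" "nonexpansive_op S F"
    and "\<And>i. i \<in> S \<Longrightarrow> J i \<le> F J i" and "\<And>k i. i \<in> S \<Longrightarrow> (F ^^ k) J i \<le> B i"
  obtains L where "\<And>i. i \<in> S \<Longrightarrow> F L i = L i" "\<And>i. i \<in> S \<Longrightarrow> (\<lambda>k. (F ^^ k) J i) \<longlonglongrightarrow> L i"
proof -
  define L where "L i = (SUP k. (F ^^ k) J i)" for i
  have conv: "(\<lambda>k. (F ^^ k) J i) \<longlonglongrightarrow> L i" if "i \<in> S" for i
    unfolding L_def
  proof (rule LIMSEQ_incseq_SUP)
    show "bdd_above (range (\<lambda>k. (F ^^ k) J i))" using assms(5) that by (auto simp: bdd_above_def)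
    have "(F ^^ k) J i \<le> (F ^^ k) (F J) i" for k
      by (rule monotone_op_funpow[OF assms(2) assms(4) that])
    then show "incseq (\<lambda>k. (F ^^ k) J i)" by (intro incseq_SucI) (simp add: funpow_Suc_right del: funpow.simps)
  qed
  show ?thesis
  proof (rule that)
    show "F L i = L i" if "i \<in> S" for i by (rule nonexpansive_op_limit_fixpoint[OF assms(1,3) conv that])
  qed (rule conv)
qed

lemma funpow_tendsto_fixpoint_if_decreasing:
  assumes "finite S" "monotone_op S F" "nonexpansive_op S F"
    and "\<And>i. i \<in> S \<Longrightarrow> F J i \<le> J i" and "\<And>k i. i \<in> S \<Longrightarrow> B i \<le> (F ^^ k) J i"
  obtains L where "\<And>i. i \<in> S \<Longrightarrow> F L i = L i" "\<And>i. i \<in> S \<Longrightarrow> (\<lambda>k. (F ^^ k) J i) \<longlonglongrightarrow> L i"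
proof -
  define L where "L i = (INF k. (F ^^ k) J i)" for i
  have conv: "(\<lambda>k. (F ^^ k) J i) \<longlonglongrightarrow> L i" if "i \<in> S" for i
    unfolding L_def
  proof (rule LIMSEQ_decseq_INF)
    show "bdd_below (range (\<lambda>k. (F ^^ k) J i))" using assms(5) that by (auto simp: bdd_below_def)
    have "(F ^^ k) (F J) i \<le> (F ^^ k) J i" for k
      by (rule monotone_op_funpow[OF assms(2) assms(4) that])
    then show "decseq (\<lambda>k. (F ^^ k) J i)" by (intro decseq_SucI) (simp add: funpow_Suc_right del: funpow.simps)
  qed
  show ?thesis
  proof (rule that)
    show "F L i = L i" if "i \<in> S" for i by (rule nonexpansive_op_limit_fixpoint[OF assms(1,3) conv that])
  qed (rule conv)
qed

section \<open>Substochastic kernels\<close>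

definition substochastic :: "nat set \<Rightarrow> (nat \<Rightarrow> nat \<Rightarrow> real) \<Rightarrow> bool" where
  "substochastic S q \<longleftrightarrow> finite S \<and> (\<forall>i\<in>S. \<forall>j\<in>S. 0 \<le> q i j) \<and> (\<forall>i\<in>S. (\<Sum>j\<in>S. q i j) \<le> 1)"

definition kernel_op :: "nat set \<Rightarrow> (nat \<Rightarrow> nat \<Rightarrow> real) \<Rightarrow> (nat \<Rightarrow> real) \<Rightarrow> nat \<Rightarrow> real" where
  "kernel_op S q f = (\<lambda>i. \<Sum>j\<in>S. q i j * f j)"

definition affine_op :: "nat set \<Rightarrow> (nat \<Rightarrow> nat \<Rightarrow> real) \<Rightarrow> (nat \<Rightarrow> real) \<Rightarrow> (nat \<Rightarrow> real) \<Rightarrow> nat \<Rightarrow> real" where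
  "affine_op S q c f = (\<lambda>i. c i + (\<Sum>j\<in>S. q i j * f j))"

definition survival :: "nat set \<Rightarrow> (nat \<Rightarrow> nat \<Rightarrow> real) \<Rightarrow> nat \<Rightarrow> nat \<Rightarrow> real" where
  "survival S q k = (kernel_op S q ^^ k) (\<lambda>_. 1)"

definition transient :: "nat set \<Rightarrow> (nat \<Rightarrow> nat \<Rightarrow> real) \<Rightarrow> bool" where
  "transient S q \<longleftrightarrow> (\<forall>i\<in>S. (INF k. survival S q k i) \<le> 0)"

definition expected_total_cost :: "nat set \<Rightarrow> (nat \<Rightarrow> nat \<Rightarrow> real) \<Rightarrow> (nat \<Rightarrow> real) \<Rightarrow> nat \<Rightarrow> real" where
  "expected_total_cost S q c i = (\<Sum>m. (kernel_op S q ^^ m) c i)"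

lemma affine_op_apply: "affine_op S q c f i = c i + (\<Sum>j\<in>S. q i j * f j)"
  by (simp add: affine_op_def)

lemma kernel_op_monotone: "substochastic S q \<Longrightarrow> monotone_op S (kernel_op S q)"
  unfolding monotone_op_def substochastic_def kernel_op_def by (auto intro!: sum_mono mult_left_mono)

lemma affine_op_monotone: "substochastic S q \<Longrightarrow> monotone_op S (affine_op S q c)"
  unfolding monotone_op_def substochastic_def affine_op_def by (auto intro!: sum_mono mult_left_mono)

lemma kernel_op_funpow_scale: "(kernel_op S q ^^ k) (\<lambda>j. a * f j) i = a * (kernel_op S q ^^ k) f i"
  by (induction k arbitrary: i) (simp_all add: kernel_op_def sum_distrib_left algebra_simps)

lemma kernel_op_funpow_const: "(kernel_op S q ^^ k) (\<lambda>_. a) i = a * survival S q k i"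
  using kernel_op_funpow_scale[where a=a and f="\<lambda>_. 1"] by (simp add: survival_def)

lemma affine_op_funpow_split:
  "(affine_op S q c ^^ k) f i = (affine_op S q c ^^ k) (\<lambda>_. 0) i + (kernel_op S q ^^ k) f i"
  by (induction k arbitrary: i) (simp_all add: kernel_op_def affine_op_def sum.distrib algebra_simps)

lemma affine_op_funpow_zero_eq_sum:
  "(affine_op S q c ^^ k) (\<lambda>_. 0) i = (\<Sum>m<k. (kernel_op S q ^^ m) c i)"
proof (induction k arbitrary: i)
  case (Suc k)
  have "(affine_op S q c ^^ Suc k) (\<lambda>_. 0) i = c i + (\<Sum>j\<in>S. q i j * (\<Sum>m<k. (kernel_op S q ^^ m) c j))"
    by (simp add: affine_op_def Suc.IH)
  also have "\<dots> = c i + (\<Sum>m<k. (kernel_op S q ^^ Suc m) c i)"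
    by (simp add: kernel_op_def sum_distrib_left sum.swap[of _ S])
  also have "\<dots> = (\<Sum>m<Suc k. (kernel_op S q ^^ m) c i)"
    unfolding sum.lessThan_Suc_shift by simp
  finally show ?case .
qed simp

lemma affine_op_funpow_zero_uminus:
  "(affine_op S q (\<lambda>i. - c i) ^^ k) (\<lambda>_. 0) i = - (affine_op S q c ^^ k) (\<lambda>_. 0) i"
  by (induction k arbitrary: i) (simp_all add: affine_op_def sum_negf[symmetric])

lemma survival_nonneg: "substochastic S q \<Longrightarrow> i \<in> S \<Longrightarrow> 0 \<le> survival S q k i"
  using monotone_op_funpow[OF kernel_op_monotone, where J="\<lambda>_. 0" and J'="\<lambda>_. 1" and k=k]
    kernel_op_funpow_const[where a=0]
  by (simp add: survival_def)

lemma survival_le_one: "substochastic S q \<Longrightarrow> i \<in> S \<Longrightarrow> survival S q k i \<le> 1"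
  unfolding survival_def
  by (rule funpow_le_self[OF kernel_op_monotone]) (auto simp: substochastic_def kernel_op_def)

lemma survival_antimono:
  assumes "substochastic S q" "i \<in> S" "k \<le> k'"
  shows "survival S q k' i \<le> survival S q k i"
proof -
  have "survival S q (Suc k) i \<le> survival S q k i" for k
    unfolding survival_def funpow_Suc_right o_def
    by (rule monotone_op_funpow[OF kernel_op_monotone[OF assms(1)] _ assms(2)])
      (use assms(1) in \<open>auto simp: substochastic_def kernel_op_def\<close>)
  then have "decseq (\<lambda>k. survival S q k i)" by (rule decseq_SucI)
  then show ?thesis using assms(3) by (simp add: monotone_on_def)
qed

lemma kernel_op_funpow_abs_le:
  assumes "substochastic S q" "\<And>j. j \<in> S \<Longrightarrow> \<bar>f j\<bar> \<le> B" "i \<in> S"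
  shows "\<bar>(kernel_op S q ^^ k) f i\<bar> \<le> B * survival S q k i"
proof -
  have "(kernel_op S q ^^ k) f i \<le> (kernel_op S q ^^ k) (\<lambda>_. B) i"
    by (rule monotone_op_funpow[OF kernel_op_monotone[OF assms(1)] _ assms(3)]) (use assms(2) in force)
  moreover have "(kernel_op S q ^^ k) (\<lambda>_. - B) i \<le> (kernel_op S q ^^ k) f i"
    by (rule monotone_op_funpow[OF kernel_op_monotone[OF assms(1)] _ assms(3)]) (use assms(2) in force)
  ultimately show ?thesis by (simp add: kernel_op_funpow_const)
qed

lemma kernel_op_funpow_abs_le_sum:
  assumes "substochastic S q" "i \<in> S"
  shows "\<bar>(kernel_op S q ^^ k) f i\<bar> \<le> (\<Sum>j\<in>S. \<bar>f j\<bar>)"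
proof -
  have "\<bar>f j\<bar> \<le> (\<Sum>j\<in>S. \<bar>f j\<bar>)" if "j \<in> S" for j
    using assms(1) that by (intro member_le_sum) (auto simp: substochastic_def)
  then have "\<bar>(kernel_op S q ^^ k) f i\<bar> \<le> (\<Sum>j\<in>S. \<bar>f j\<bar>) * survival S q k i"
    by (rule kernel_op_funpow_abs_le[OF assms(1) _ assms(2)])
  also have "\<dots> \<le> (\<Sum>j\<in>S. \<bar>f j\<bar>)"
    using survival_le_one[OF assms] survival_nonneg[OF assms]
    by (intro mult_left_le) (auto intro: sum_nonneg)
  finally show ?thesis .
qed

lemma affine_op_funpow_zero_le:
  assumes "substochastic S q" "\<And>i. i \<in> S \<Longrightarrow> affine_op S q c f i \<le> f i" "i \<in> S"
  shows "(affine_op S q c ^^ k) (\<lambda>_. 0) i \<le> f i + (\<Sum>j\<in>S. \<bar>f j\<bar>)"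
proof -
  have "(affine_op S q c ^^ k) f i \<le> f i"
    by (rule funpow_le_self[OF affine_op_monotone[OF assms(1)]]) (use assms(2,3) in auto)
  then show ?thesis
    using kernel_op_funpow_abs_le_sum[OF assms(1,3), where k=k and f=f]
      affine_op_funpow_split[of k S q c f i]
    by linarith
qed

lemma affine_op_funpow_zero_ge:
  assumes "substochastic S q" "\<And>i. i \<in> S \<Longrightarrow> f i \<le> affine_op S q c f i" "i \<in> S"
  shows "f i - (\<Sum>j\<in>S. \<bar>f j\<bar>) \<le> (affine_op S q c ^^ k) (\<lambda>_. 0) i"
proof -
  have "f i \<le> (affine_op S q c ^^ k) f i"
    by (rule funpow_ge_self[OF affine_op_monotone[OF assms(1)]]) (use assms(2,3) in auto)
  then show ?thesis
    using kernel_op_funpow_abs_le_sum[OF assms(1,3), where k=k and f=f]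
      affine_op_funpow_split[of k S q c f i]
    by linarith
qed

lemma transient_survival_le_half:
  assumes "substochastic S q" "transient S q"
  obtains K where "0 < K" "\<And>i. i \<in> S \<Longrightarrow> survival S q K i \<le> 1/2"
proof -
  have "\<exists>k. survival S q k i < 1/2" if i: "i \<in> S" for i
  proof -
    have bdd: "bdd_below (range (\<lambda>k. survival S q k i))"
      using survival_nonneg[OF assms(1) i] by (auto simp: bdd_below_def)
    have "(INF k. survival S q k i) < 1/2" using assms(2) i by (force simp: transient_def)
    then show ?thesis using cINF_less_iff[OF _ bdd, of "1/2"] by simp
  qed
  then obtain kf where kf: "\<And>i. i \<in> S \<Longrightarrow> survival S q (kf i) i < 1/2" by metis
  define K where "K = Suc (\<Sum>i\<in>S. kf i)"
  have "survival S q K i \<le> 1/2" if i: "i \<in> S" for i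
  proof -
    have "kf i \<le> K"
      using member_le_sum[OF i, of kf] assms(1) by (simp add: K_def substochastic_def)
    then have "survival S q K i \<le> survival S q (kf i) i" by (rule survival_antimono[OF assms(1) i])
    then show ?thesis using kf[OF i] by linarith
  qed
  then show ?thesis using that[of K] by (simp add: K_def)
qed

lemma survival_add_le:
  assumes "substochastic S q" "\<And>j. j \<in> S \<Longrightarrow> survival S q K j \<le> a" "i \<in> S"
  shows "survival S q (k + K) i \<le> a * survival S q k i"
proof -
  have "survival S q (k + K) i = (kernel_op S q ^^ k) (survival S q K) i"
    by (simp add: survival_def funpow_add)
  also have "\<dots> \<le> (kernel_op S q ^^ k) (\<lambda>_. a) i"
    by (rule monotone_op_funpow[OF kernel_op_monotone[OF assms(1)] assms(2,3)])
  also have "\<dots> = a * survival S q k i" by (rule kernel_op_funpow_const)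
  finally show ?thesis .
qed

text \<open>Since the state space is finite, a single horizon \<open>K\<close> halves the survival probability
  from every state, which gives geometric decay.\<close>

lemma transient_survival_geometric:
  assumes "substochastic S q" "transient S q"
  obtains \<theta> :: real where "0 \<le> \<theta>" "\<theta> < 1" "\<And>i k. i \<in> S \<Longrightarrow> survival S q k i \<le> 2 * \<theta> ^ k"
proof -
  obtain K where K: "0 < K" "\<And>i. i \<in> S \<Longrightarrow> survival S q K i \<le> 1/2"
    using transient_survival_le_half[OF assms] by blast
  have halving: "survival S q (k + m * K) i \<le> (1/2) ^ m" if i: "i \<in> S" for k m i
  proof (induction m)
    case 0
    then show ?case using survival_le_one[OF assms(1) i] by simp
  next
    case (Suc m)
    have "survival S q (k + Suc m * K) i = survival S q ((k + m * K) + K) i" by (simp add: algebra_simps)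
    also have "\<dots> \<le> 1/2 * survival S q (k + m * K) i" by (rule survival_add_le[OF assms(1) K(2) i])
    also have "\<dots> \<le> (1/2) ^ Suc m" using Suc.IH by simp
    finally show ?case .
  qed
  define \<theta> where "\<theta> = root K (1/2)"
  have \<theta>: "0 < \<theta>" "\<theta> < 1" "\<theta> ^ K = 1/2"
    using K(1) by (simp_all add: \<theta>_def real_root_lt_1_iff)
  have "survival S q k i \<le> 2 * \<theta> ^ k" if i: "i \<in> S" for k i
  proof -
    have "survival S q k i \<le> (\<theta> ^ K) ^ (k div K)"
      using halving[OF i, of "k mod K" "k div K"] by (simp add: \<theta>(3))
    also have "\<dots> = 2 * (\<theta> ^ K * (\<theta> ^ K) ^ (k div K))" by (simp add: \<theta>(3))
    also have "\<dots> \<le> 2 * (\<theta> ^ (k mod K) * (\<theta> ^ K) ^ (k div K))"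
      using \<theta> K(1) by (intro mult_left_mono mult_right_mono power_decreasing) auto
    also have "\<theta> ^ (k mod K) * (\<theta> ^ K) ^ (k div K) = \<theta> ^ (k mod K + K * (k div K))"
      by (metis power_add power_mult)
    also have "k mod K + K * (k div K) = k" by simp
    finally show ?thesis .
  qed
  with \<theta>(1,2) show ?thesis by (intro that[of \<theta>]) auto
qed

lemma transient_kernel_op_funpow_bound:
  assumes "substochastic S q" "transient S q"
  obtains \<theta> :: real where "0 \<le> \<theta>" "\<theta> < 1"
    "\<And>i m. i \<in> S \<Longrightarrow> \<bar>(kernel_op S q ^^ m) f i\<bar> \<le> (\<Sum>j\<in>S. \<bar>f j\<bar>) * (2 * \<theta> ^ m)"
proof -
  obtain \<theta> :: real where \<theta>: "0 \<le> \<theta>" "\<theta> < 1" "\<And>i k. i \<in> S \<Longrightarrow> survival S q k i \<le> 2 * \<theta> ^ k"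
    using transient_survival_geometric[OF assms] by blast
  have "\<bar>(kernel_op S q ^^ m) f i\<bar> \<le> (\<Sum>j\<in>S. \<bar>f j\<bar>) * (2 * \<theta> ^ m)" if i: "i \<in> S" for i m
  proof -
    have "\<bar>f j\<bar> \<le> (\<Sum>j\<in>S. \<bar>f j\<bar>)" if "j \<in> S" for j
      using assms(1) that by (intro member_le_sum) (auto simp: substochastic_def)
    then have "\<bar>(kernel_op S q ^^ m) f i\<bar> \<le> (\<Sum>j\<in>S. \<bar>f j\<bar>) * survival S q m i"
      by (rule kernel_op_funpow_abs_le[OF assms(1) _ i])
    also have "\<dots> \<le> (\<Sum>j\<in>S. \<bar>f j\<bar>) * (2 * \<theta> ^ m)"
      using \<theta>(3)[OF i] by (intro mult_left_mono) (auto intro: sum_nonneg)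
    finally show ?thesis .
  qed
  then show ?thesis using that \<theta>(1,2) by blast
qed

lemma transient_kernel_op_funpow_tendsto_zero:
  assumes "substochastic S q" "transient S q" "i \<in> S"
  shows "(\<lambda>m. (kernel_op S q ^^ m) f i) \<longlonglongrightarrow> 0"
proof -
  obtain \<theta> :: real where \<theta>: "0 \<le> \<theta>" "\<theta> < 1"
    "\<And>m. \<bar>(kernel_op S q ^^ m) f i\<bar> \<le> (\<Sum>j\<in>S. \<bar>f j\<bar>) * (2 * \<theta> ^ m)"
    using transient_kernel_op_funpow_bound[OF assms(1,2)] assms(3) by metis
  have "(\<lambda>m. (\<Sum>j\<in>S. \<bar>f j\<bar>) * (2 * \<theta> ^ m)) \<longlonglongrightarrow> 0"
    using \<theta>(1,2) by (intro tendsto_mult_right_zero LIMSEQ_power_zero) simp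
  then show ?thesis by (rule Lim_null_comparison[rotated]) (simp add: \<theta>(3))
qed

lemma transient_kernel_op_funpow_summable:
  assumes "substochastic S q" "transient S q" "i \<in> S"
  shows "summable (\<lambda>m. (kernel_op S q ^^ m) f i)"
proof -
  obtain \<theta> :: real where \<theta>: "0 \<le> \<theta>" "\<theta> < 1"
    "\<And>m. \<bar>(kernel_op S q ^^ m) f i\<bar> \<le> (\<Sum>j\<in>S. \<bar>f j\<bar>) * (2 * \<theta> ^ m)"
    using transient_kernel_op_funpow_bound[OF assms(1,2)] assms(3) by metis
  have "summable (\<lambda>m. (\<Sum>j\<in>S. \<bar>f j\<bar>) * (2 * \<theta> ^ m))"
    using \<theta>(1,2) by (intro summable_mult summable_geometric) simp
  then show ?thesis by (rule summable_comparison_test'[where N=0]) (simp add: \<theta>(3))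
qed

lemma transient_affine_op_tendsto:
  assumes "substochastic S q" "transient S q" "i \<in> S"
  shows "(\<lambda>k. (affine_op S q c ^^ k) f i) \<longlonglongrightarrow> expected_total_cost S q c i"
proof -
  have "(\<lambda>k. (affine_op S q c ^^ k) (\<lambda>_. 0) i) \<longlonglongrightarrow> expected_total_cost S q c i"
    unfolding affine_op_funpow_zero_eq_sum expected_total_cost_def
    by (rule summable_LIMSEQ[OF transient_kernel_op_funpow_summable[OF assms]])
  from tendsto_add[OF this transient_kernel_op_funpow_tendsto_zero[OF assms, of f]]
  show ?thesis by (simp add: affine_op_funpow_split[of _ S q c f i])
qed

lemma transient_expected_total_cost_fixpoint:
  assumes "substochastic S q" "transient S q" "i \<in> S"
  shows "affine_op S q c (expected_total_cost S q c) i = expected_total_cost S q c i"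
proof -
  have "(\<lambda>k. c i + (\<Sum>j\<in>S. q i j * (affine_op S q c ^^ k) (\<lambda>_. 0) j))
          \<longlonglongrightarrow> c i + (\<Sum>j\<in>S. q i j * expected_total_cost S q c j)"
    by (intro tendsto_intros transient_affine_op_tendsto[OF assms(1,2)])
  then have "(\<lambda>k. affine_op S q c ((affine_op S q c ^^ k) (\<lambda>_. 0)) i)
               \<longlonglongrightarrow> affine_op S q c (expected_total_cost S q c) i"
    by (simp only: affine_op_apply)
  moreover have "(\<lambda>k. affine_op S q c ((affine_op S q c ^^ k) (\<lambda>_. 0)) i) \<longlonglongrightarrow> expected_total_cost S q c i"
    using LIMSEQ_Suc[OF transient_affine_op_tendsto[OF assms]] by simp
  ultimately show ?thesis using LIMSEQ_unique by blast
qed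

section \<open>Finite Markov decision processes\<close>

locale finite_mdp =
  fixes S :: "nat set" and A :: "nat \<Rightarrow> 'a set"
    and q :: "nat \<Rightarrow> 'a \<Rightarrow> nat \<Rightarrow> real" and c :: "nat \<Rightarrow> 'a \<Rightarrow> real"
  assumes finite_states: "finite S"
    and finite_actions: "\<And>i. i \<in> S \<Longrightarrow> finite (A i)"
    and actions_nonempty: "\<And>i. i \<in> S \<Longrightarrow> A i \<noteq> {}"
    and q_nonneg: "\<And>i a j. i \<in> S \<Longrightarrow> a \<in> A i \<Longrightarrow> j \<in> S \<Longrightarrow> 0 \<le> q i a j"
    and q_sum_le_one: "\<And>i a. i \<in> S \<Longrightarrow> a \<in> A i \<Longrightarrow> (\<Sum>j\<in>S. q i a j) \<le> 1"
begin

definition Q :: "(nat \<Rightarrow> real) \<Rightarrow> nat \<Rightarrow> 'a \<Rightarrow> real" where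
  "Q J i a = c i a + (\<Sum>j\<in>S. q i a j * J j)"

definition T :: "(nat \<Rightarrow> real) \<Rightarrow> nat \<Rightarrow> real" where
  "T J i = Min (Q J i ` A i)"

definition policy_kernel :: "(nat \<Rightarrow> 'a) \<Rightarrow> nat \<Rightarrow> nat \<Rightarrow> real" where
  "policy_kernel d i j = q i (d i) j"

definition policy_cost :: "(nat \<Rightarrow> 'a) \<Rightarrow> nat \<Rightarrow> real" where
  "policy_cost d i = c i (d i)"

abbreviation policy_op :: "(nat \<Rightarrow> 'a) \<Rightarrow> (nat \<Rightarrow> real) \<Rightarrow> nat \<Rightarrow> real" where
  "policy_op d \<equiv> affine_op S (policy_kernel d) (policy_cost d)"

definition policy_value :: "(nat \<Rightarrow> 'a) \<Rightarrow> nat \<Rightarrow> real" where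
  "policy_value d = expected_total_cost S (policy_kernel d) (policy_cost d)"

text \<open>The standing assumption of stochastic shortest path problems.  Policies are the
  deterministic stationary ones, i.e.\ the elements of \<open>Pi\<^sub>E S A\<close>.\<close>

definition improper_unbounded :: bool where
  "improper_unbounded \<longleftrightarrow> (\<forall>d\<in>Pi\<^sub>E S A. \<not> transient S (policy_kernel d) \<longrightarrow>
     (\<exists>i\<in>S. \<not> bdd_above (range (\<lambda>k. (policy_op d ^^ k) (\<lambda>_. 0) i))))"

lemma policy_op_eq_Q: "policy_op d J i = Q J i (d i)"
  by (simp add: affine_op_apply Q_def policy_kernel_def policy_cost_def)

lemma policy_substochastic: "d \<in> Pi\<^sub>E S A \<Longrightarrow> substochastic S (policy_kernel d)"
  by (auto simp: substochastic_def policy_kernel_def finite_states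
      intro: q_nonneg q_sum_le_one dest: PiE_mem)

lemma T_le_Q: "i \<in> S \<Longrightarrow> a \<in> A i \<Longrightarrow> T J i \<le> Q J i a"
  unfolding T_def by (auto intro: Min_le finite_actions)

lemma T_attained: "i \<in> S \<Longrightarrow> \<exists>a\<in>A i. T J i = Q J i a"
  unfolding T_def using Min_in[of "Q J i ` A i"] finite_actions actions_nonempty by fastforce

lemma greedy_policy:
  obtains d where "d \<in> Pi\<^sub>E S A" "\<And>i. i \<in> S \<Longrightarrow> policy_op d J i = T J i"
proof -
  define d where "d i = (if i \<in> S then (SOME a. a \<in> A i \<and> T J i = Q J i a) else undefined)" for i
  have d: "d i \<in> A i \<and> T J i = Q J i (d i)" if "i \<in> S" for i
    using someI_ex[OF T_attained[OF that, unfolded Bex_def]] that by (simp add: d_def)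
  show ?thesis
  proof (rule that)
    show "d \<in> Pi\<^sub>E S A" using d by (auto simp: PiE_iff extensional_def d_def)
    show "policy_op d J i = T J i" if "i \<in> S" for i using d[OF that] by (simp add: policy_op_eq_Q)
  qed
qed

lemma Q_mono: "i \<in> S \<Longrightarrow> a \<in> A i \<Longrightarrow> (\<And>j. j \<in> S \<Longrightarrow> J j \<le> J' j) \<Longrightarrow> Q J i a \<le> Q J' i a"
  unfolding Q_def by (auto intro!: sum_mono mult_left_mono q_nonneg)

lemma Q_nonexpansive:
  assumes "i \<in> S" "a \<in> A i" "\<And>j. j \<in> S \<Longrightarrow> \<bar>J j - J' j\<bar> \<le> e"
  shows "\<bar>Q J i a - Q J' i a\<bar> \<le> e"
proof -
  have "\<bar>Q J i a - Q J' i a\<bar> = \<bar>\<Sum>j\<in>S. q i a j * (J j - J' j)\<bar>"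
    unfolding Q_def by (simp add: sum_subtractf algebra_simps)
  also have "\<dots> \<le> (\<Sum>j\<in>S. q i a j * e)"
    using assms q_nonneg[OF assms(1,2)]
    by (intro order_trans[OF sum_abs] sum_mono) (simp add: abs_mult mult_left_mono)
  also have "\<dots> = (\<Sum>j\<in>S. q i a j) * e" by (simp add: sum_distrib_right)
  also have "\<dots> \<le> 1 * e"
    using q_sum_le_one[OF assms(1,2)] assms(3)[OF assms(1)] by (intro mult_right_mono) auto
  finally show ?thesis by simp
qed

lemma T_monotone: "monotone_op S T"
proof (rule monotone_opI)
  fix J J' :: "nat \<Rightarrow> real" and i assume le: "\<And>j. j \<in> S \<Longrightarrow> J j \<le> J' j" and i: "i \<in> S"
  obtain a where a: "a \<in> A i" "T J' i = Q J' i a" using T_attained[OF i] by blast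
  have "Q J i a \<le> Q J' i a" by (rule Q_mono[OF i a(1)]) (rule le)
  then show "T J i \<le> T J' i" using T_le_Q[OF i a(1), of J] a(2) by linarith
qed

lemma T_nonexpansive: "nonexpansive_op S T"
proof (rule nonexpansive_opI)
  fix J J' :: "nat \<Rightarrow> real" and e i assume le: "\<And>j. j \<in> S \<Longrightarrow> \<bar>J j - J' j\<bar> \<le> e" and i: "i \<in> S"
  obtain a where a: "a \<in> A i" "T J' i = Q J' i a" using T_attained[OF i] by blast
  obtain b where b: "b \<in> A i" "T J i = Q J i b" using T_attained[OF i] by blast
  have "\<bar>Q J i a - Q J' i a\<bar> \<le> e" by (rule Q_nonexpansive[OF i a(1)]) (rule le)
  moreover have "\<bar>Q J i b - Q J' i b\<bar> \<le> e" by (rule Q_nonexpansive[OF i b(1)]) (rule le)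
  ultimately show "\<bar>T J i - T J' i\<bar> \<le> e"
    using T_le_Q[OF i a(1), of J] T_le_Q[OF i b(1), of J'] a(2) b(2) by linarith
qed

lemma transient_if_superharmonic:
  assumes "improper_unbounded" "d \<in> Pi\<^sub>E S A" "\<And>i. i \<in> S \<Longrightarrow> policy_op d J i \<le> J i"
  shows "transient S (policy_kernel d)"
proof (rule ccontr)
  assume "\<not> transient S (policy_kernel d)"
  with assms(1,2) obtain i where i: "i \<in> S" "\<not> bdd_above (range (\<lambda>k. (policy_op d ^^ k) (\<lambda>_. 0) i))"
    unfolding improper_unbounded_def by auto
  have "(policy_op d ^^ k) (\<lambda>_. 0) i \<le> J i + (\<Sum>j\<in>S. \<bar>J j\<bar>)" for k
    by (rule affine_op_funpow_zero_le[OF policy_substochastic[OF assms(2)] _ i(1)]) (rule assms(3))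
  then show False using i(2) by (auto simp: bdd_above_def)
qed

lemma policy_value_le:
  assumes "improper_unbounded" "d \<in> Pi\<^sub>E S A" "\<And>i. i \<in> S \<Longrightarrow> policy_op d J i \<le> J i" "i \<in> S"
  shows "policy_value d i \<le> J i"
proof (rule LIMSEQ_le_const2)
  show "(\<lambda>k. (policy_op d ^^ k) J i) \<longlonglongrightarrow> policy_value d i"
    unfolding policy_value_def
    by (rule transient_affine_op_tendsto[OF policy_substochastic[OF assms(2)]
          transient_if_superharmonic[OF assms(1-3)] assms(4)])
  have "(policy_op d ^^ k) J i \<le> J i" for k
    by (rule funpow_le_self[OF affine_op_monotone[OF policy_substochastic[OF assms(2)]]])
      (use assms(3,4) in auto)
  then show "\<exists>N. \<forall>k\<ge>N. (policy_op d ^^ k) J i \<le> J i" by blast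
qed

lemma policy_value_ge:
  assumes "d \<in> Pi\<^sub>E S A" "transient S (policy_kernel d)" "\<And>i. i \<in> S \<Longrightarrow> J i \<le> policy_op d J i"
    "i \<in> S"
  shows "J i \<le> policy_value d i"
proof (rule LIMSEQ_le_const)
  show "(\<lambda>k. (policy_op d ^^ k) J i) \<longlonglongrightarrow> policy_value d i"
    unfolding policy_value_def
    by (rule transient_affine_op_tendsto[OF policy_substochastic[OF assms(1)] assms(2,4)])
  have "J i \<le> (policy_op d ^^ k) J i" for k
    by (rule funpow_ge_self[OF affine_op_monotone[OF policy_substochastic[OF assms(1)]]])
      (use assms(3,4) in auto)
  then show "\<exists>N. \<forall>k\<ge>N. J i \<le> (policy_op d ^^ k) J i" by blast
qed

text \<open>Comparison principle: the greedy policy of the supersolution is transient and its value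
  separates the two.\<close>

lemma sub_le_super:
  assumes "improper_unbounded" "\<And>i. i \<in> S \<Longrightarrow> J i \<le> T J i" "\<And>i. i \<in> S \<Longrightarrow> T F i \<le> F i" "i \<in> S"
  shows "J i \<le> F i"
proof -
  obtain d where d: "d \<in> Pi\<^sub>E S A" "\<And>i. i \<in> S \<Longrightarrow> policy_op d F i = T F i"
    using greedy_policy by blast
  have super: "policy_op d F j \<le> F j" if "j \<in> S" for j using d(2) assms(3) that by simp
  have sub: "J j \<le> policy_op d J j" if j: "j \<in> S" for j
    using assms(2)[OF j] T_le_Q[OF j, of "d j" J] d(1) j by (auto simp: policy_op_eq_Q PiE_iff)
  have "transient S (policy_kernel d)" by (rule transient_if_superharmonic[OF assms(1) d(1)]) (rule super)
  then have "J i \<le> policy_value d i" by (rule policy_value_ge[OF d(1)]) (use sub assms(4) in auto)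
  also have "\<dots> \<le> F i" by (rule policy_value_le[OF assms(1) d(1) super assms(4)])
  finally show ?thesis .
qed

lemma T_fixpoint_unique:
  assumes "improper_unbounded" "\<And>i. i \<in> S \<Longrightarrow> T J i = J i" "\<And>i. i \<in> S \<Longrightarrow> T F i = F i" "i \<in> S"
  shows "J i = F i"
  using sub_le_super[OF assms(1) _ _ assms(4), of J F] sub_le_super[OF assms(1) _ _ assms(4), of F J]
    assms(2,3) by force

lemma minimal_transient_policy:
  assumes "improper_unbounded" "\<And>i. i \<in> S \<Longrightarrow> T J i \<le> J i"
  obtains ds where "ds \<in> Pi\<^sub>E S A" "transient S (policy_kernel ds)"
    "\<And>d. d \<in> Pi\<^sub>E S A \<Longrightarrow> transient S (policy_kernel d) \<Longrightarrow>
       (\<Sum>i\<in>S. policy_value ds i) \<le> (\<Sum>i\<in>S. policy_value d i)"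
proof -
  define D where "D = {d \<in> Pi\<^sub>E S A. transient S (policy_kernel d)}"
  have "finite (Pi\<^sub>E S A)" using finite_states finite_actions by (rule finite_PiE)
  then have finite: "finite D" unfolding D_def by (rule rev_finite_subset) auto
  obtain d where d: "d \<in> Pi\<^sub>E S A" "\<And>i. i \<in> S \<Longrightarrow> policy_op d J i = T J i"
    using greedy_policy by blast
  have "transient S (policy_kernel d)"
    by (rule transient_if_superharmonic[OF assms(1) d(1), where J=J]) (use d(2) assms(2) in auto)
  with d(1) have "D \<noteq> {}" by (auto simp: D_def)
  define f where "f d = (\<Sum>i\<in>S. policy_value d i)" for d
  have "Min (f ` D) \<in> f ` D" using finite \<open>D \<noteq> {}\<close> by (intro Min_in) auto
  then obtain ds where ds: "ds \<in> D" "f ds = Min (f ` D)" by auto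
  show ?thesis
  proof (rule that)
    show "ds \<in> Pi\<^sub>E S A" "transient S (policy_kernel ds)" using ds(1) by (auto simp: D_def)
    show "(\<Sum>i\<in>S. policy_value ds i) \<le> (\<Sum>i\<in>S. policy_value d i)"
      if "d \<in> Pi\<^sub>E S A" "transient S (policy_kernel d)" for d
      using Min_le[OF finite_imageI[OF finite], of "f d" f] that ds(2) by (auto simp: D_def f_def)
  qed
qed

text \<open>The value of a policy with minimal total value solves Bellman's equation: any greedy
  improvement of it is again transient and no worse, hence equally good.\<close>

lemma T_fixpoint_exists:
  assumes "improper_unbounded" "\<And>i. i \<in> S \<Longrightarrow> T J i \<le> J i"
  obtains Js where "\<And>i. i \<in> S \<Longrightarrow> T Js i = Js i"
proof -
  obtain ds where ds: "ds \<in> Pi\<^sub>E S A" "transient S (policy_kernel ds)"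
    "\<And>d. d \<in> Pi\<^sub>E S A \<Longrightarrow> transient S (policy_kernel d) \<Longrightarrow>
       (\<Sum>i\<in>S. policy_value ds i) \<le> (\<Sum>i\<in>S. policy_value d i)"
    using minimal_transient_policy[OF assms] by blast
  define Js where "Js = policy_value ds"
  have Js_fix: "policy_op ds Js i = Js i" if "i \<in> S" for i
    unfolding Js_def policy_value_def
    by (rule transient_expected_total_cost_fixpoint[OF policy_substochastic[OF ds(1)] ds(2) that])
  obtain d where d: "d \<in> Pi\<^sub>E S A" "\<And>i. i \<in> S \<Longrightarrow> policy_op d Js i = T Js i"
    using greedy_policy by blast
  have super: "policy_op d Js j \<le> Js j" if j: "j \<in> S" for j
    using d(2)[OF j] T_le_Q[OF j, of "ds j" Js] ds(1) j Js_fix[OF j] by (auto simp: policy_op_eq_Q PiE_iff)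
  have d_transient: "transient S (policy_kernel d)"
    by (rule transient_if_superharmonic[OF assms(1) d(1)]) (rule super)
  have le: "policy_value d j \<le> Js j" if "j \<in> S" for j
    by (rule policy_value_le[OF assms(1) d(1) _ that]) (rule super)
  have eq: "policy_value d j = Js j" if j: "j \<in> S" for j
  proof (rule ccontr)
    assume "policy_value d j \<noteq> Js j"
    with le[OF j] have "policy_value d j < Js j" by simp
    then have "(\<Sum>i\<in>S. policy_value d i) < (\<Sum>i\<in>S. Js i)"
      using le j finite_states by (intro sum_strict_mono_ex1) auto
    then show False using ds(3)[OF d(1) d_transient] by (simp add: Js_def)
  qed
  have "T Js i = Js i" if i: "i \<in> S" for i
  proof -
    have "T Js i = policy_op d (policy_value d) i"
      using d(2)[OF i] monotone_op_cong[OF affine_op_monotone[OF policy_substochastic[OF d(1)]] _ i,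
          of Js "policy_value d"] eq by simp
    also have "\<dots> = policy_value d i"
      unfolding policy_value_def
      by (rule transient_expected_total_cost_fixpoint[OF policy_substochastic[OF d(1)] d_transient i])
    finally show ?thesis using eq[OF i] by simp
  qed
  then show ?thesis by (rule that)
qed

lemma funpow_T_tendsto_from_above:
  assumes "improper_unbounded" "\<And>i. i \<in> S \<Longrightarrow> T Js i = Js i" "\<And>j. j \<in> S \<Longrightarrow> Js j \<le> H j" "i \<in> S"
  shows "(\<lambda>k. (T ^^ k) H i) \<longlonglongrightarrow> Js i"
proof -
  obtain d where d: "d \<in> Pi\<^sub>E S A" "\<And>i. i \<in> S \<Longrightarrow> policy_op d Js i = T Js i"
    using greedy_policy by blast
  have d_Js: "policy_op d Js j = Js j" if "j \<in> S" for j using d(2)[OF that] assms(2)[OF that] by simp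
  have d_transient: "transient S (policy_kernel d)"
    by (rule transient_if_superharmonic[OF assms(1) d(1), where J=Js]) (simp add: d_Js)
  have "policy_value d i = Js i"
  proof (rule antisym)
    show "policy_value d i \<le> Js i" by (rule policy_value_le[OF assms(1) d(1) _ assms(4)]) (simp add: d_Js)
    show "Js i \<le> policy_value d i" by (rule policy_value_ge[OF d(1) d_transient _ assms(4)]) (simp add: d_Js)
  qed
  then have upper_tendsto: "(\<lambda>k. (policy_op d ^^ k) H i) \<longlonglongrightarrow> Js i"
    unfolding policy_value_def
    using transient_affine_op_tendsto[OF policy_substochastic[OF d(1)] d_transient assms(4),
        where c="policy_cost d" and f=H] by simp
  have upper: "(T ^^ k) H i \<le> (policy_op d ^^ k) H i" for k
  proof (rule funpow_le_funpow[OF affine_op_monotone[OF policy_substochastic[OF d(1)]] _ assms(4)])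
    show "T J j \<le> policy_op d J j" if "j \<in> S" for J j
      unfolding policy_op_eq_Q by (rule T_le_Q[OF that PiE_mem[OF d(1) that]])
  qed
  have lower: "Js i \<le> (T ^^ k) H i" for k
  proof -
    have "Js i = (T ^^ k) Js i" by (rule funpow_fixpoint[OF T_monotone _ assms(4), symmetric]) (rule assms(2))
    also have "\<dots> \<le> (T ^^ k) H i" by (rule monotone_op_funpow[OF T_monotone _ assms(4)]) (rule assms(3))
    finally show ?thesis .
  qed
  show ?thesis
    by (rule tendsto_sandwich[where f="\<lambda>_. Js i" and h="\<lambda>k. (policy_op d ^^ k) H i"])
      (simp_all add: lower upper upper_tendsto)
qed

lemma funpow_T_tendsto_from_below:
  assumes "improper_unbounded" "\<And>i. i \<in> S \<Longrightarrow> T Js i = Js i" "0 \<le> B" "i \<in> S"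
  shows "(\<lambda>k. (T ^^ k) (\<lambda>j. Js j - B) i) \<longlonglongrightarrow> Js i"
proof -
  let ?lo = "\<lambda>j. Js j - B"
  have "\<bar>T ?lo j - T Js j\<bar> \<le> B" if "j \<in> S" for j
    by (rule nonexpansive_opD[OF T_nonexpansive _ that]) (simp add: assms(3))
  then have up: "?lo j \<le> T ?lo j" if "j \<in> S" for j using assms(2)[OF that] that by fastforce
  have bound: "(T ^^ k) ?lo j \<le> Js j" if "j \<in> S" for k j
  proof -
    have "(T ^^ k) ?lo j \<le> (T ^^ k) Js j"
      by (rule monotone_op_funpow[OF T_monotone _ that]) (simp add: assms(3))
    also have "\<dots> = Js j" by (rule funpow_fixpoint[OF T_monotone _ that]) (rule assms(2))
    finally show ?thesis .
  qed
  obtain L where L: "\<And>i. i \<in> S \<Longrightarrow> T L i = L i" "\<And>i. i \<in> S \<Longrightarrow> (\<lambda>k. (T ^^ k) ?lo i) \<longlonglongrightarrow> L i"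
    using funpow_tendsto_fixpoint_if_increasing[where F=T and J="?lo" and B=Js,
        OF finite_states T_monotone T_nonexpansive up bound] by blast
  have "L i = Js i" by (rule T_fixpoint_unique[OF assms(1) L(1) assms(2) assms(4)])
  then show ?thesis using L(2)[OF assms(4)] by simp
qed

theorem funpow_T_tendsto:
  assumes "improper_unbounded" "\<And>i. i \<in> S \<Longrightarrow> T Js i = Js i" "i \<in> S"
  shows "(\<lambda>k. (T ^^ k) J i) \<longlonglongrightarrow> Js i"
proof -
  define B where "B = (\<Sum>j\<in>S. \<bar>J j - Js j\<bar>)"
  have B: "\<bar>J j - Js j\<bar> \<le> B" if "j \<in> S" for j
    unfolding B_def using finite_states that by (intro member_le_sum) auto
  have "0 \<le> B" unfolding B_def by (intro sum_nonneg) auto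
  have lower: "(T ^^ k) (\<lambda>j. Js j - B) i \<le> (T ^^ k) J i" for k
    by (rule monotone_op_funpow[OF T_monotone _ assms(3)]) (use B in \<open>force simp: abs_le_iff\<close>)
  have upper: "(T ^^ k) J i \<le> (T ^^ k) (\<lambda>j. Js j + B) i" for k
    by (rule monotone_op_funpow[OF T_monotone _ assms(3)]) (use B in \<open>force simp: abs_le_iff\<close>)
  have "(\<lambda>k. (T ^^ k) (\<lambda>j. Js j - B) i) \<longlonglongrightarrow> Js i"
    by (rule funpow_T_tendsto_from_below[OF assms(1) _ \<open>0 \<le> B\<close> assms(3)]) (rule assms(2))
  moreover have "(\<lambda>k. (T ^^ k) (\<lambda>j. Js j + B) i) \<longlonglongrightarrow> Js i"
    by (rule funpow_T_tendsto_from_above[OF assms(1) _ _ assms(3)]) (simp_all add: assms(2) \<open>0 \<le> B\<close>)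
  ultimately show ?thesis
    by (rule tendsto_sandwich[rotated 2]) (simp_all add: lower upper)
qed

end

section \<open>Minimax theorem for matrix games\<close>

definition prob_simplex :: "'a set \<Rightarrow> ('a \<Rightarrow> real) set" where
  "prob_simplex U = {x. (\<forall>u\<in>U. 0 \<le> x u) \<and> sum x U = 1}"

definition max_payoff :: "'a set \<Rightarrow> 'b set \<Rightarrow> ('a \<Rightarrow> 'b \<Rightarrow> real) \<Rightarrow> ('a \<Rightarrow> real) \<Rightarrow> real" where
  "max_payoff U V X x = Max ((\<lambda>v. \<Sum>u\<in>U. x u * X u v) ` V)"

definition mixed_saddle :: "('a \<Rightarrow> 'b \<Rightarrow> real) \<Rightarrow> 'a set \<Rightarrow> 'b set \<Rightarrow> bool" where
  "mixed_saddle X U V \<longleftrightarrow> (\<exists>x\<in>prob_simplex U. \<exists>y\<in>prob_simplex V. \<exists>w.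
     (\<forall>v\<in>V. (\<Sum>u\<in>U. x u * X u v) \<le> w) \<and> (\<forall>u\<in>U. w \<le> (\<Sum>v\<in>V. y v * X u v)))"

lemma prob_simplex_le_one: "finite U \<Longrightarrow> x \<in> prob_simplex U \<Longrightarrow> u \<in> U \<Longrightarrow> x u \<le> 1"
  using member_le_sum[of u U x] by (auto simp: prob_simplex_def)

lemma prob_simplex_nonempty: "finite U \<Longrightarrow> U \<noteq> {} \<Longrightarrow> prob_simplex U \<noteq> {}"
  using exI[of "\<lambda>x. x \<in> prob_simplex U" "\<lambda>_. 1 / real (card U)"] by (auto simp: prob_simplex_def)

lemma prob_simplex_mix:
  assumes "x \<in> prob_simplex U" "x' \<in> prob_simplex U" "0 \<le> t" "t \<le> 1"
  shows "(\<lambda>u. (1 - t) * x u + t * x' u) \<in> prob_simplex U"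
  using assms by (auto simp: prob_simplex_def sum.distrib sum_distrib_left[symmetric])

lemma sum_extend_zero:
  fixes y f :: "'a \<Rightarrow> real"
  assumes "finite V" "v0 \<in> V"
  shows "(\<Sum>v\<in>V. (if v = v0 then 0 else y v) * f v) = (\<Sum>v\<in>V - {v0}. y v * f v)"
proof -
  have "(\<Sum>v\<in>V - {v0}. (if v = v0 then 0 else y v) * f v) = (\<Sum>v\<in>V - {v0}. y v * f v)"
    by (rule sum.cong) auto
  then show ?thesis using sum.remove[OF assms, of "\<lambda>v. (if v = v0 then 0 else y v) * f v"] by simp
qed

lemma prob_simplex_extend_zero:
  assumes "finite V" "v0 \<in> V" "y \<in> prob_simplex (V - {v0})"
  shows "(\<lambda>v. if v = v0 then 0 else y v) \<in> prob_simplex V"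
  using assms sum_extend_zero[OF assms(1,2), of y "\<lambda>_. 1"] by (auto simp: prob_simplex_def)

lemma sum_mix:
  fixes x x' X :: "'a \<Rightarrow> real"
  shows "(\<Sum>u\<in>U. ((1 - t) * x u + t * x' u) * X u) = (1 - t) * (\<Sum>u\<in>U. x u * X u) + t * (\<Sum>u\<in>U. x' u * X u)"
  by (simp add: distrib_right sum.distrib sum_distrib_left mult.assoc)

lemma sum_bilinear_swap:
  fixes X :: "'a \<Rightarrow> 'b \<Rightarrow> real"
  shows "(\<Sum>v\<in>V. y v * (\<Sum>u\<in>U. x u * X u v)) = (\<Sum>u\<in>U. x u * (\<Sum>v\<in>V. y v * X u v))"
  unfolding sum_distrib_left by (subst sum.swap) (simp add: mult.left_commute)

lemma max_payoff_ge: "finite V \<Longrightarrow> v \<in> V \<Longrightarrow> (\<Sum>u\<in>U. x u * X u v) \<le> max_payoff U V X x"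
  unfolding max_payoff_def by (rule Max_ge) auto

lemma max_payoff_le:
  "finite V \<Longrightarrow> V \<noteq> {} \<Longrightarrow> (\<And>v. v \<in> V \<Longrightarrow> (\<Sum>u\<in>U. x u * X u v) \<le> c) \<Longrightarrow> max_payoff U V X x \<le> c"
  unfolding max_payoff_def by (rule Max.boundedI) auto

lemma max_payoff_less:
  "finite V \<Longrightarrow> V \<noteq> {} \<Longrightarrow> (\<And>v. v \<in> V \<Longrightarrow> (\<Sum>u\<in>U. x u * X u v) < c) \<Longrightarrow> max_payoff U V X x < c"
  unfolding max_payoff_def by (subst Max_less_iff) auto

lemma bounded_convergent_subseq_finite:
  fixes x :: "nat \<Rightarrow> 'a \<Rightarrow> real"
  assumes "finite I" "\<And>k i. i \<in> I \<Longrightarrow> \<bar>x k i\<bar> \<le> B"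
  shows "\<exists>r. strict_mono r \<and> (\<forall>i\<in>I. convergent (\<lambda>k. x (r k) i))"
  using assms
proof (induction I rule: finite_induct)
  case empty
  have "strict_mono (id :: nat \<Rightarrow> nat)" by (simp add: strict_mono_def)
  then show ?case by blast
next
  case (insert a I)
  then obtain r where r: "strict_mono r" "\<forall>i\<in>I. convergent (\<lambda>k. x (r k) i)" by auto
  have "bounded (range (\<lambda>k. x (r k) a))" unfolding bounded_iff using insert.prems by auto
  then obtain l r' where r': "strict_mono r'" "((\<lambda>k. x (r k) a) \<circ> r') \<longlonglongrightarrow> l"
    using bounded_imp_convergent_subsequence by blast
  have "convergent (\<lambda>k. x ((r \<circ> r') k) i)" if "i \<in> insert a I" for i
  proof (cases "i = a")
    case True
    then show ?thesis using r'(2) by (auto simp: o_def convergent_def)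
  next
    case False
    with that r(2) obtain l' where "(\<lambda>k. x (r k) i) \<longlonglongrightarrow> l'" by (auto simp: convergent_def)
    from LIMSEQ_subseq_LIMSEQ[OF this r'(1)] show ?thesis by (auto simp: o_def convergent_def)
  qed
  moreover have "strict_mono (r \<circ> r')" using r(1) r'(1) by (rule strict_mono_o)
  ultimately show ?case by blast
qed

lemma prob_simplex_convergent_subseq:
  fixes xs :: "nat \<Rightarrow> 'a \<Rightarrow> real"
  assumes "finite U" "\<And>k. xs k \<in> prob_simplex U"
  obtains r x where "strict_mono r" "x \<in> prob_simplex U" "\<And>u. u \<in> U \<Longrightarrow> (\<lambda>k. xs (r k) u) \<longlonglongrightarrow> x u"
proof -
  have "\<bar>xs k u\<bar> \<le> 1" if "u \<in> U" for k u
    using assms prob_simplex_le_one[OF assms(1) assms(2) that] that by (auto simp: prob_simplex_def)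
  then obtain r where r: "strict_mono r" "\<And>u. u \<in> U \<Longrightarrow> convergent (\<lambda>k. xs (r k) u)"
    using bounded_convergent_subseq_finite[OF assms(1), of xs 1] by blast
  define x where "x u = lim (\<lambda>k. xs (r k) u)" for u
  have conv: "(\<lambda>k. xs (r k) u) \<longlonglongrightarrow> x u" if "u \<in> U" for u
    using r(2)[OF that] unfolding x_def by (rule convergent_LIMSEQ_iff[THEN iffD1])
  have "0 \<le> x u" if u: "u \<in> U" for u
    by (rule LIMSEQ_le_const[OF conv[OF u]]) (use assms(2) u in \<open>auto simp: prob_simplex_def\<close>)
  moreover have "(\<lambda>k. \<Sum>u\<in>U. xs (r k) u) \<longlonglongrightarrow> (\<Sum>u\<in>U. x u)" by (intro tendsto_sum conv)
  then have "sum x U = 1" using assms(2) LIMSEQ_unique[OF _ tendsto_const] by (simp add: prob_simplex_def)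
  ultimately show ?thesis using that[OF r(1) _ conv] by (simp add: prob_simplex_def)
qed

lemma max_payoff_lower_bound:
  assumes "finite U" "finite V" "v0 \<in> V" "x \<in> prob_simplex U"
  shows "- (\<Sum>u\<in>U. \<bar>X u v0\<bar>) \<le> max_payoff U V X x"
proof -
  have "\<bar>x u * X u v0\<bar> \<le> \<bar>X u v0\<bar>" if "u \<in> U" for u
    using assms(4) prob_simplex_le_one[OF assms(1,4) that] that
    by (simp add: abs_mult prob_simplex_def mult_left_le_one_le)
  then have "- \<bar>X u v0\<bar> \<le> x u * X u v0" if "u \<in> U" for u
    using abs_le_D2[of "x u * X u v0"] that by fastforce
  then have "(\<Sum>u\<in>U. - \<bar>X u v0\<bar>) \<le> (\<Sum>u\<in>U. x u * X u v0)" by (rule sum_mono)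
  also have "\<dots> \<le> max_payoff U V X x" by (rule max_payoff_ge[OF assms(2,3)])
  finally show ?thesis by (simp add: sum_negf)
qed

lemma max_payoff_attains_min:
  fixes X :: "'a \<Rightarrow> 'b \<Rightarrow> real"
  assumes "finite U" "U \<noteq> {}" "finite V" "V \<noteq> {}"
  obtains x where "x \<in> prob_simplex U" "\<forall>x'\<in>prob_simplex U. max_payoff U V X x \<le> max_payoff U V X x'"
proof -
  obtain v0 where v0: "v0 \<in> V" using assms(4) by auto
  note lower = max_payoff_lower_bound[OF assms(1,3) v0]
  have bdd: "bdd_below (max_payoff U V X ` prob_simplex U)"
    using lower by (intro bdd_belowI[where m="- (\<Sum>u\<in>U. \<bar>X u v0\<bar>)"]) auto
  define m where "m = Inf (max_payoff U V X ` prob_simplex U)"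
  have "\<exists>x\<in>prob_simplex U. max_payoff U V X x < m + inverse (real (Suc k))" for k
  proof -
    have "Inf (max_payoff U V X ` prob_simplex U) < m + inverse (real (Suc k))" by (simp add: m_def)
    then show ?thesis using cINF_less_iff[OF prob_simplex_nonempty[OF assms(1,2)] bdd] by blast
  qed
  then obtain xs where xs: "\<And>k. xs k \<in> prob_simplex U" "\<And>k. max_payoff U V X (xs k) < m + inverse (real (Suc k))"
    by metis
  obtain r x where r: "strict_mono r" and x: "x \<in> prob_simplex U"
    and conv: "\<And>u. u \<in> U \<Longrightarrow> (\<lambda>k. xs (r k) u) \<longlonglongrightarrow> x u"
    using prob_simplex_convergent_subseq[where xs=xs, OF assms(1) xs(1)] by blast
  have "max_payoff U V X x \<le> m"
  proof (rule max_payoff_le[OF assms(3,4)])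
    fix v assume v: "v \<in> V"
    have "(\<Sum>u\<in>U. xs (r k) u * X u v) \<le> m + inverse (real (Suc k))" for k
    proof -
      have "(\<Sum>u\<in>U. xs (r k) u * X u v) < m + inverse (real (Suc (r k)))"
        using max_payoff_ge[OF assms(3) v, where U=U and x="xs (r k)" and X=X] xs(2)[of "r k"] by linarith
      also have "\<dots> \<le> m + inverse (real (Suc k))"
        using seq_suble[OF r, of k] by (simp add: le_imp_inverse_le)
      finally show ?thesis by simp
    qed
    moreover have "(\<lambda>k. \<Sum>u\<in>U. xs (r k) u * X u v) \<longlonglongrightarrow> (\<Sum>u\<in>U. x u * X u v)"
      by (intro tendsto_sum tendsto_mult_right conv)
    ultimately show "(\<Sum>u\<in>U. x u * X u v) \<le> m"
      using LIMSEQ_le[OF _ LIMSEQ_inverse_real_of_nat_add[of m]] by blast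
  qed
  moreover have "m \<le> max_payoff U V X x'" if "x' \<in> prob_simplex U" for x'
    unfolding m_def by (rule cInf_lower[OF _ bdd]) (use that in auto)
  ultimately show ?thesis by (intro that[OF x] ballI) (meson order_trans)
qed

lemma convex_comb_less:
  fixes p0 p1 a :: real
  assumes "p0 < a"
  obtains t where "0 < t" "t \<le> 1" "(1 - t) * p0 + t * p1 < a"
proof (cases "p1 < a")
  case True
  then show ?thesis using that[of 1] by simp
next
  case False
  define t where "t = (a - p0) / (2 * (p1 - p0))"
  have d: "0 < p1 - p0" using False assms by simp
  have "0 < t" "t \<le> 1/2" unfolding t_def using assms d False by (simp_all add: field_simps)
  moreover have "t * (2 * (p1 - p0)) = a - p0" unfolding t_def using d by simp
  then have "t * (p1 - p0) = (a - p0) / 2" by (simp add: field_simps)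
  then have "(1 - t) * p0 + t * p1 < a" using assms by (simp add: algebra_simps)
  ultimately show ?thesis using that[of t] by simp
qed

lemma convex_comb_less_if_le:
  fixes p r a t :: real
  shows "0 < t \<Longrightarrow> t \<le> 1 \<Longrightarrow> p \<le> a \<Longrightarrow> r < a \<Longrightarrow> (1 - t) * p + t * r < a"
proof -
  assume "0 < t" "t \<le> 1" "p \<le> a" "r < a"
  then have "(1 - t) * p \<le> (1 - t) * a" "t * r < t * a" by (simp_all add: mult_left_mono)
  then show ?thesis by (simp add: algebra_simps)
qed

lemma mixed_saddle_transpose:
  assumes "mixed_saddle X U V"
  shows "mixed_saddle (\<lambda>v u. - X u v) V U"
proof -
  obtain x y w where x: "x \<in> prob_simplex U" and y: "y \<in> prob_simplex V"
    and "\<forall>v\<in>V. (\<Sum>u\<in>U. x u * X u v) \<le> w" "\<forall>u\<in>U. w \<le> (\<Sum>v\<in>V. y v * X u v)"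
    using assms unfolding mixed_saddle_def by blast
  then have "(\<forall>u\<in>U. (\<Sum>v\<in>V. y v * - X u v) \<le> - w) \<and> (\<forall>v\<in>V. - w \<le> (\<Sum>u\<in>U. x u * - X u v))"
    by (simp add: sum_negf)
  with x y show ?thesis unfolding mixed_saddle_def by blast
qed

lemma mixed_saddle_transpose_iff: "mixed_saddle (\<lambda>v u. - X u v) V U \<longleftrightarrow> mixed_saddle X U V"
  using mixed_saddle_transpose[of "\<lambda>v u. - X u v" V U] mixed_saddle_transpose[of X U V] by auto

text \<open>If the first player can guarantee \<open>a\<close> and the second player can guarantee \<open>b\<close>, then
  \<open>a \<le> b\<close>: average both guarantees against the other player's strategy.\<close>

lemma guarantees_le:
  fixes X :: "'a \<Rightarrow> 'b \<Rightarrow> real"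
  assumes "x \<in> prob_simplex U" "y \<in> prob_simplex V"
    and "\<And>v. v \<in> V \<Longrightarrow> a \<le> (\<Sum>u\<in>U. x u * X u v)" "\<And>u. u \<in> U \<Longrightarrow> (\<Sum>v\<in>V. y v * X u v) \<le> b"
  shows "a \<le> b"
proof -
  have "a = (\<Sum>v\<in>V. y v * a)" using assms(2) by (simp add: prob_simplex_def sum_distrib_right[symmetric])
  also have "\<dots> \<le> (\<Sum>v\<in>V. y v * (\<Sum>u\<in>U. x u * X u v))"
    using assms(2,3) by (intro sum_mono mult_left_mono) (auto simp: prob_simplex_def)
  also have "\<dots> = (\<Sum>u\<in>U. x u * (\<Sum>v\<in>V. y v * X u v))" by (rule sum_bilinear_swap)
  also have "\<dots> \<le> (\<Sum>u\<in>U. x u * b)"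
    using assms(1,4) by (intro sum_mono mult_left_mono) (auto simp: prob_simplex_def)
  also have "\<dots> = b" using assms(1) by (simp add: prob_simplex_def sum_distrib_right[symmetric])
  finally show ?thesis .
qed

text \<open>If some column \<open>v0\<close> is strictly worse for
  player I than the value \<open>a\<close> of his optimal strategy \<open>x0\<close>, then the game without \<open>v0\<close> has
  value at least \<open>a\<close>: otherwise mixing \<open>x0\<close> with a little of the optimal strategy of the
  smaller game would beat \<open>a\<close>.\<close>

lemma mixed_saddle_drop_column:
  fixes X :: "'a \<Rightarrow> 'b \<Rightarrow> real"
  assumes V: "finite V" "v0 \<in> V" "V - {v0} \<noteq> {}"
    and x0: "x0 \<in> prob_simplex U" "\<forall>x\<in>prob_simplex U. max_payoff U V X x0 \<le> max_payoff U V X x"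
    and v0: "(\<Sum>u\<in>U. x0 u * X u v0) < max_payoff U V X x0"
    and saddle: "mixed_saddle X U (V - {v0})"
  shows "mixed_saddle X U V"
proof -
  define a where "a = max_payoff U V X x0"
  obtain x' y' w where x': "x' \<in> prob_simplex U" and y': "y' \<in> prob_simplex (V - {v0})"
    and w1: "\<forall>v\<in>V - {v0}. (\<Sum>u\<in>U. x' u * X u v) \<le> w"
    and w2: "\<forall>u\<in>U. w \<le> (\<Sum>v\<in>V - {v0}. y' v * X u v)"
    using saddle unfolding mixed_saddle_def by blast
  have "a \<le> w"
  proof (rule ccontr)
    assume "\<not> a \<le> w"
    obtain t where t: "0 < t" "t \<le> 1" "(1 - t) * (\<Sum>u\<in>U. x0 u * X u v0) + t * (\<Sum>u\<in>U. x' u * X u v0) < a"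
      using convex_comb_less[OF v0[folded a_def]] by blast
    define xt where "xt u = (1 - t) * x0 u + t * x' u" for u
    have "max_payoff U V X xt < a"
    proof (rule max_payoff_less[OF V(1)])
      show "V \<noteq> {}" using V(2) by blast
      fix v assume v: "v \<in> V"
      show "(\<Sum>u\<in>U. xt u * X u v) < a"
      proof (cases "v = v0")
        case True
        then show ?thesis using t(3) unfolding xt_def sum_mix by simp
      next
        case False
        with v w1 have "(\<Sum>u\<in>U. x' u * X u v) \<le> w" by blast
        then have "(\<Sum>u\<in>U. x' u * X u v) < a" using \<open>\<not> a \<le> w\<close> by linarith
        then show ?thesis unfolding xt_def sum_mix
          using convex_comb_less_if_le[OF t(1,2) max_payoff_ge[OF V(1) v]] by (simp add: a_def)
      qed
    qed
    moreover have "xt \<in> prob_simplex U" unfolding xt_def by (rule prob_simplex_mix[OF x0(1) x']) (use t in auto)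
    ultimately show False using x0(2) by (fastforce simp: a_def)
  qed
  define y where "y v = (if v = v0 then 0 else y' v)" for v
  have "y \<in> prob_simplex V" unfolding y_def by (rule prob_simplex_extend_zero[OF V(1,2) y'])
  moreover have "\<forall>u\<in>U. a \<le> (\<Sum>v\<in>V - {v0}. y' v * X u v)" using w2 \<open>a \<le> w\<close> by force
  then have "\<forall>u\<in>U. a \<le> (\<Sum>v\<in>V. y v * X u v)" by (simp add: y_def sum_extend_zero[OF V(1,2)])
  moreover have "\<forall>v\<in>V. (\<Sum>u\<in>U. x0 u * X u v) \<le> a" unfolding a_def using max_payoff_ge[OF V(1)] by blast
  ultimately show ?thesis using x0(1) unfolding mixed_saddle_def by blast
qed

lemma max_payoff_other_column:
  assumes "v0 \<in> V" "(\<Sum>u\<in>U. x u * X u v0) < max_payoff U V X x"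
  shows "V - {v0} \<noteq> {}"
proof
  assume "V - {v0} = {}"
  with assms(1) have "V = {v0}" by auto
  with assms(2) show False by (simp add: max_payoff_def)
qed

lemma mixed_saddle_if_equalizing:
  fixes X :: "'a \<Rightarrow> 'b \<Rightarrow> real"
  assumes "finite U" "finite V" "x0 \<in> prob_simplex U" "y0 \<in> prob_simplex V"
    and x0: "\<And>v. v \<in> V \<Longrightarrow> max_payoff U V X x0 \<le> (\<Sum>u\<in>U. x0 u * X u v)"
    and y0: "\<And>u. u \<in> U \<Longrightarrow> max_payoff V U (\<lambda>v u. - X u v) y0 \<le> (\<Sum>v\<in>V. y0 v * - X u v)"
  shows "mixed_saddle X U V"
proof -
  define w where "w = max_payoff U V X x0"
  define b where "b = - max_payoff V U (\<lambda>v u. - X u v) y0"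
  have upper: "(\<Sum>v\<in>V. y0 v * X u v) \<le> b" if "u \<in> U" for u
    using y0[OF that] by (simp add: b_def sum_negf)
  have lower: "b \<le> (\<Sum>v\<in>V. y0 v * X u v)" if "u \<in> U" for u
    using max_payoff_ge[OF assms(1) that, where U=V and x=y0 and X="\<lambda>v u. - X u v"]
    by (simp add: b_def sum_negf)
  have "w \<le> b" by (rule guarantees_le[OF assms(3,4)]) (use x0 upper in \<open>simp_all add: w_def\<close>)
  then have "\<forall>u\<in>U. w \<le> (\<Sum>v\<in>V. y0 v * X u v)" using lower by force
  moreover have "\<forall>v\<in>V. (\<Sum>u\<in>U. x0 u * X u v) \<le> w"
    unfolding w_def using max_payoff_ge[OF assms(2)] by blast
  ultimately show ?thesis using assms(3,4) unfolding mixed_saddle_def by blast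
qed

theorem mixed_saddle_exists:
  fixes X :: "'a \<Rightarrow> 'b \<Rightarrow> real"
  assumes "finite U" "U \<noteq> {}" "finite V" "V \<noteq> {}"
  shows "mixed_saddle X U V"
  using assms
proof (induction "card U + card V" arbitrary: U V rule: less_induct)
  case less
  let ?Y = "\<lambda>v u. - X u v"
  obtain x0 where x0: "x0 \<in> prob_simplex U"
    "\<forall>x\<in>prob_simplex U. max_payoff U V X x0 \<le> max_payoff U V X x"
    using max_payoff_attains_min[OF less.prems] by blast
  obtain y0 where y0: "y0 \<in> prob_simplex V"
    "\<forall>y\<in>prob_simplex V. max_payoff V U ?Y y0 \<le> max_payoff V U ?Y y"
    using max_payoff_attains_min[OF less.prems(3,4,1,2)] by blast
  consider (column) v0 where "v0 \<in> V" "(\<Sum>u\<in>U. x0 u * X u v0) < max_payoff U V X x0"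
    | (row) u0 where "u0 \<in> U" "(\<Sum>v\<in>V. y0 v * ?Y v u0) < max_payoff V U ?Y y0"
    | (equalizing) "\<And>v. v \<in> V \<Longrightarrow> max_payoff U V X x0 \<le> (\<Sum>u\<in>U. x0 u * X u v)"
        "\<And>u. u \<in> U \<Longrightarrow> max_payoff V U ?Y y0 \<le> (\<Sum>v\<in>V. y0 v * ?Y v u)"
    by (meson not_le)
  then show ?case
  proof cases
    case column
    note nonempty = max_payoff_other_column[OF column]
    have "card U + card (V - {v0}) < card U + card V"
      using card_Diff1_less[OF less.prems(3) column(1)] by simp
    with less nonempty have "mixed_saddle X U (V - {v0})" by blast
    then show ?thesis by (rule mixed_saddle_drop_column[OF less.prems(3) column(1) nonempty x0 column(2)])
  next
    case row
    note nonempty = max_payoff_other_column[OF row]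
    have "card (U - {u0}) + card V < card U + card V"
      using card_Diff1_less[OF less.prems(1) row(1)] by simp
    with less nonempty have "mixed_saddle X (U - {u0}) V" by blast
    then have "mixed_saddle ?Y V (U - {u0})" by (rule mixed_saddle_transpose)
    then have "mixed_saddle ?Y V U" by (rule mixed_saddle_drop_column[OF less.prems(1) row(1) nonempty y0 row(2)])
    then show ?thesis by (rule mixed_saddle_transpose_iff[THEN iffD1])
  next
    case equalizing
    then show ?thesis by (rule mixed_saddle_if_equalizing[OF less.prems(1,3) x0(1) y0(1)])
  qed
qed

section \<open>The one-stage game\<close>

lemma St_finite: "finite (St G)" by (simp add: St_def)
lemma zero_notin_St: "0 \<notin> St G" by (simp add: St_def)
lemma St_nonzero: "i \<in> St G \<Longrightarrow> i \<noteq> 0" using zero_notin_St[of G] by metis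
lemma So_eq_insert_St: "So G = insert 0 (St G)" by (auto simp: So_def St_def)
lemma St_subset_So: "St G \<subseteq> So G" by (auto simp: So_def St_def)

lemma wf_game_finite:
  assumes "wf_game G" "i \<in> St G"
  shows "finite (Uc G i)" "Uc G i \<noteq> {}" "finite (Vc G i)" "Vc G i \<noteq> {}"
  using assms by (auto simp: wf_game_def)

lemma wf_game_tp_nonneg:
  assumes "wf_game G" "i \<in> St G" "u \<in> Uc G i" "v \<in> Vc G i" "j \<in> So G"
  shows "0 \<le> tp G i u v j"
  using assms by (auto simp: wf_game_def)

lemma wf_game_tp_sum_le_one:
  assumes "wf_game G" "i \<in> St G" "u \<in> Uc G i" "v \<in> Vc G i"
  shows "(\<Sum>j\<in>St G. tp G i u v j) \<le> 1"
proof -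
  have "(\<Sum>j\<in>So G. tp G i u v j) = 1" using assms by (auto simp: wf_game_def)
  moreover have "(\<Sum>j\<in>So G. tp G i u v j) = tp G i u v 0 + (\<Sum>j\<in>St G. tp G i u v j)"
    unfolding So_eq_insert_St by (rule sum.insert[OF St_finite zero_notin_St])
  moreover have "0 \<le> tp G i u v 0" using wf_game_tp_nonneg[OF assms] by (simp add: So_def)
  ultimately show ?thesis by linarith
qed

definition mixed_kernel :: "('u,'v) ssp_game \<Rightarrow> 'u pmf \<Rightarrow> 'v pmf \<Rightarrow> nat \<Rightarrow> nat \<Rightarrow> real" where
  "mixed_kernel G \<rho> \<sigma> i j = (\<Sum>u\<in>Uc G i. \<Sum>v\<in>Vc G i. pmf \<rho> u * pmf \<sigma> v * tp G i u v j)"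

definition mixed_cost :: "('u,'v) ssp_game \<Rightarrow> 'u pmf \<Rightarrow> 'v pmf \<Rightarrow> nat \<Rightarrow> real" where
  "mixed_cost G \<rho> \<sigma> i = (\<Sum>u\<in>Uc G i. \<Sum>v\<in>Vc G i. pmf \<rho> u * pmf \<sigma> v * gcost G i u v)"

lemma sum_Qval_eq_affine:
  "(\<Sum>u\<in>Uc G i. \<Sum>v\<in>Vc G i. pmf \<rho> u * pmf \<sigma> v * (gcost G i u v + (\<Sum>j\<in>St G. tp G i u v j * W j)))
   = mixed_cost G \<rho> \<sigma> i + (\<Sum>j\<in>St G. mixed_kernel G \<rho> \<sigma> i j * W j)"
proof -
  have "(\<Sum>u\<in>Uc G i. \<Sum>v\<in>Vc G i. pmf \<rho> u * pmf \<sigma> v * (gcost G i u v + (\<Sum>j\<in>St G. tp G i u v j * W j)))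
    = mixed_cost G \<rho> \<sigma> i + (\<Sum>u\<in>Uc G i. \<Sum>v\<in>Vc G i. \<Sum>j\<in>St G. pmf \<rho> u * pmf \<sigma> v * tp G i u v j * W j)"
  proof -
    have e: "pmf \<rho> u * pmf \<sigma> v * (gcost G i u v + (\<Sum>j\<in>St G. tp G i u v j * W j))
        = pmf \<rho> u * pmf \<sigma> v * gcost G i u v + (\<Sum>j\<in>St G. pmf \<rho> u * pmf \<sigma> v * tp G i u v j * W j)" for u v
      by (simp only: distrib_left sum_distrib_left mult.assoc)
    show ?thesis unfolding mixed_cost_def e by (simp only: sum.distrib)
  qed
  also have "(\<Sum>u\<in>Uc G i. \<Sum>v\<in>Vc G i. \<Sum>j\<in>St G. pmf \<rho> u * pmf \<sigma> v * tp G i u v j * W j)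
     = (\<Sum>j\<in>St G. mixed_kernel G \<rho> \<sigma> i j * W j)"
    unfolding mixed_kernel_def sum_distrib_right
    by (subst sum.swap, rule sum.cong[OF refl], subst sum.swap, rule refl)
  finally show ?thesis .
qed

lemma Qval_eq_affine: "Qval G J i \<rho> \<sigma> = mixed_cost G \<rho> \<sigma> i + (\<Sum>j\<in>St G. mixed_kernel G \<rho> \<sigma> i j * J j)"
  unfolding Qval_def by (rule sum_Qval_eq_affine)

lemma mixed_kernel_bounds:
  assumes wf: "wf_game G" and i: "i \<in> St G" and r: "\<rho> \<in> Ubar G i" and s: "\<sigma> \<in> Vbar G i"
  shows "\<forall>j\<in>St G. 0 \<le> mixed_kernel G \<rho> \<sigma> i j" "(\<Sum>j\<in>St G. mixed_kernel G \<rho> \<sigma> i j) \<le> 1"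
proof -
  show "\<forall>j\<in>St G. 0 \<le> mixed_kernel G \<rho> \<sigma> i j"
  proof
    fix j assume j: "j \<in> St G"
    then have jo: "j \<in> So G" using St_subset_So by blast
    show "0 \<le> mixed_kernel G \<rho> \<sigma> i j" unfolding mixed_kernel_def
    proof (intro sum_nonneg)
      fix u v assume "u \<in> Uc G i" "v \<in> Vc G i"
      then show "0 \<le> pmf \<rho> u * pmf \<sigma> v * tp G i u v j" using wf_game_tp_nonneg[OF wf i _ _ jo] by simp
    qed
  qed
  have "(\<Sum>j\<in>St G. mixed_kernel G \<rho> \<sigma> i j) = (\<Sum>u\<in>Uc G i. \<Sum>v\<in>Vc G i. pmf \<rho> u * pmf \<sigma> v * (\<Sum>j\<in>St G. tp G i u v j))"
    unfolding mixed_kernel_def sum_distrib_left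
    by (subst sum.swap, rule sum.cong[OF refl], subst sum.swap, rule refl)
  also have "\<dots> \<le> (\<Sum>u\<in>Uc G i. \<Sum>v\<in>Vc G i. pmf \<rho> u * pmf \<sigma> v * 1)"
  proof (intro sum_mono)
    fix u v assume "u \<in> Uc G i" "v \<in> Vc G i"
    then show "pmf \<rho> u * pmf \<sigma> v * (\<Sum>j\<in>St G. tp G i u v j) \<le> pmf \<rho> u * pmf \<sigma> v * 1"
      using wf_game_tp_sum_le_one[OF wf i] by (intro mult_left_mono) auto
  qed
  also have "\<dots> = (\<Sum>u\<in>Uc G i. pmf \<rho> u) * (\<Sum>v\<in>Vc G i. pmf \<sigma> v)"
    by (simp only: sum_product mult_1_right)
  also have "\<dots> = 1"
  proof -
    have "(\<Sum>u\<in>Uc G i. pmf \<rho> u) = 1" using r wf_game_finite[OF wf i] by (intro sum_pmf_eq_1) (auto simp: Ubar_def)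
    moreover have "(\<Sum>v\<in>Vc G i. pmf \<sigma> v) = 1" using s wf_game_finite[OF wf i] by (intro sum_pmf_eq_1) (auto simp: Vbar_def)
    ultimately show ?thesis by simp
  qed
  finally show "(\<Sum>j\<in>St G. mixed_kernel G \<rho> \<sigma> i j) \<le> 1" .
qed

lemma SR1_Ubar: "\<mu> \<in> SR1 G \<Longrightarrow> i \<in> St G \<Longrightarrow> \<mu> i \<in> Ubar G i"
  by (simp add: SR1_def Ubar_def)
lemma SR2_Vbar: "\<nu> \<in> SR2 G \<Longrightarrow> i \<in> St G \<Longrightarrow> \<nu> i \<in> Vbar G i"
  by (simp add: SR2_def Vbar_def)

lemma sum_pmf_return:
  fixes g :: "'a \<Rightarrow> real"
  assumes "finite V" "v \<in> V"
  shows "(\<Sum>v'\<in>V. pmf (return_pmf v) v' * g v') = g v"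
proof -
  have "(\<Sum>v'\<in>V. pmf (return_pmf v) v' * g v') = (\<Sum>v'\<in>V. if v' = v then g v' else 0)"
    by (rule sum.cong) (auto simp: pmf_return)
  also have "\<dots> = g v" using assms by (simp add: sum.delta)
  finally show ?thesis .
qed

definition payoff :: "('u,'v) ssp_game \<Rightarrow> (nat \<Rightarrow> real) \<Rightarrow> nat \<Rightarrow> 'u \<Rightarrow> 'v \<Rightarrow> real" where
  "payoff G J i u v = gcost G i u v + (\<Sum>j\<in>St G. tp G i u v j * J j)"

lemma Qval_eq_bilinear:
  "Qval G J i \<rho> \<sigma> = (\<Sum>u\<in>Uc G i. pmf \<rho> u * (\<Sum>v\<in>Vc G i. pmf \<sigma> v * payoff G J i u v))"
  by (simp add: Qval_def payoff_def sum_distrib_left mult.assoc)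

lemma Qval_eq_bilinear':
  "Qval G J i \<rho> \<sigma> = (\<Sum>v\<in>Vc G i. pmf \<sigma> v * (\<Sum>u\<in>Uc G i. pmf \<rho> u * payoff G J i u v))"
  unfolding Qval_eq_bilinear by (rule sum_bilinear_swap[symmetric])

lemma Qval_eq_sum_return_right:
  assumes "wf_game G" "i \<in> St G"
  shows "Qval G J i \<rho> \<sigma> = (\<Sum>v\<in>Vc G i. pmf \<sigma> v * Qval G J i \<rho> (return_pmf v))"
proof -
  have "Qval G J i \<rho> (return_pmf v) = (\<Sum>u\<in>Uc G i. pmf \<rho> u * payoff G J i u v)" if "v \<in> Vc G i" for v
    unfolding Qval_eq_bilinear'[of G J i \<rho> "return_pmf v"]
    by (rule sum_pmf_return[OF wf_game_finite(3)[OF assms] that])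
  then show ?thesis by (simp add: Qval_eq_bilinear'[of G J i \<rho> \<sigma>] cong: sum.cong)
qed

lemma Qval_eq_sum_return_left:
  assumes "wf_game G" "i \<in> St G"
  shows "Qval G J i \<rho> \<sigma> = (\<Sum>u\<in>Uc G i. pmf \<rho> u * Qval G J i (return_pmf u) \<sigma>)"
proof -
  have "Qval G J i (return_pmf u) \<sigma> = (\<Sum>v\<in>Vc G i. pmf \<sigma> v * payoff G J i u v)" if "u \<in> Uc G i" for u
    unfolding Qval_eq_bilinear[of G J i "return_pmf u" \<sigma>]
    by (rule sum_pmf_return[OF wf_game_finite(1)[OF assms] that])
  then show ?thesis by (simp add: Qval_eq_bilinear[of G J i \<rho> \<sigma>] cong: sum.cong)
qed

lemma sum_pmf_le_Max:
  assumes "finite A" "set_pmf p \<subseteq> A" "A \<noteq> {}"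
  shows "(\<Sum>a\<in>A. pmf p a * f a) \<le> Max (f ` A)"
proof -
  have "(\<Sum>a\<in>A. pmf p a * f a) \<le> (\<Sum>a\<in>A. pmf p a * Max (f ` A))"
    using assms by (intro sum_mono mult_left_mono) auto
  also have "\<dots> = Max (f ` A)" using sum_pmf_eq_1[OF assms(1,2)] by (simp add: sum_distrib_right[symmetric])
  finally show ?thesis .
qed

lemma Min_le_sum_pmf:
  assumes "finite A" "set_pmf p \<subseteq> A" "A \<noteq> {}"
  shows "Min (f ` A) \<le> (\<Sum>a\<in>A. pmf p a * f a)"
proof -
  have "Min (f ` A) = (\<Sum>a\<in>A. pmf p a * Min (f ` A))" using sum_pmf_eq_1[OF assms(1,2)] by (simp add: sum_distrib_right[symmetric])
  also have "\<dots> \<le> (\<Sum>a\<in>A. pmf p a * f a)"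
    using assms by (intro sum_mono mult_left_mono) auto
  finally show ?thesis .
qed

lemma Qval_le_Max_return:
  assumes "wf_game G" "i \<in> St G" "\<sigma> \<in> Vbar G i"
  shows "Qval G J i \<rho> \<sigma> \<le> Max ((\<lambda>v. Qval G J i \<rho> (return_pmf v)) ` Vc G i)"
  unfolding Qval_eq_sum_return_right[OF assms(1,2), of J \<rho> \<sigma>]
  using assms wf_game_finite[OF assms(1,2)] by (intro sum_pmf_le_Max) (auto simp: Vbar_def)

lemma Min_return_le_Qval:
  assumes "wf_game G" "i \<in> St G" "\<rho> \<in> Ubar G i"
  shows "Min ((\<lambda>u. Qval G J i (return_pmf u) \<sigma>) ` Uc G i) \<le> Qval G J i \<rho> \<sigma>"
  unfolding Qval_eq_sum_return_left[OF assms(1,2), of J \<rho> \<sigma>]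
  using assms wf_game_finite[OF assms(1,2)] by (intro Min_le_sum_pmf) (auto simp: Ubar_def)

lemma SUP_Vbar_Qval:
  assumes "wf_game G" "i \<in> St G"
  shows "(SUP \<sigma>\<in>Vbar G i. Qval G J i \<rho> \<sigma>) = Max ((\<lambda>v. Qval G J i \<rho> (return_pmf v)) ` Vc G i)"
proof (rule cSup_eq_maximum)
  have "Max ((\<lambda>v. Qval G J i \<rho> (return_pmf v)) ` Vc G i) \<in> (\<lambda>v. Qval G J i \<rho> (return_pmf v)) ` Vc G i"
    using wf_game_finite[OF assms] by (intro Max_in) auto
  then obtain v where v: "v \<in> Vc G i" "Max ((\<lambda>v. Qval G J i \<rho> (return_pmf v)) ` Vc G i) = Qval G J i \<rho> (return_pmf v)"
    by auto
  have "return_pmf v \<in> Vbar G i" using v(1) by (simp add: Vbar_def)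
  then show "Max ((\<lambda>v. Qval G J i \<rho> (return_pmf v)) ` Vc G i) \<in> (\<lambda>\<sigma>. Qval G J i \<rho> \<sigma>) ` Vbar G i"
    using v(2) by auto
next
  fix x assume "x \<in> (\<lambda>\<sigma>. Qval G J i \<rho> \<sigma>) ` Vbar G i"
  then show "x \<le> Max ((\<lambda>v. Qval G J i \<rho> (return_pmf v)) ` Vc G i)"
    using Qval_le_Max_return[OF assms] by auto
qed

lemma INF_Ubar_Qval:
  assumes "wf_game G" "i \<in> St G"
  shows "(INF \<rho>\<in>Ubar G i. Qval G J i \<rho> \<sigma>) = Min ((\<lambda>u. Qval G J i (return_pmf u) \<sigma>) ` Uc G i)"
proof (rule cInf_eq_minimum)
  have "Min ((\<lambda>u. Qval G J i (return_pmf u) \<sigma>) ` Uc G i) \<in> (\<lambda>u. Qval G J i (return_pmf u) \<sigma>) ` Uc G i"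
    using wf_game_finite[OF assms] by (intro Min_in) auto
  then obtain u where u: "u \<in> Uc G i" "Min ((\<lambda>u. Qval G J i (return_pmf u) \<sigma>) ` Uc G i) = Qval G J i (return_pmf u) \<sigma>"
    by auto
  have "return_pmf u \<in> Ubar G i" using u(1) by (simp add: Ubar_def)
  then show "Min ((\<lambda>u. Qval G J i (return_pmf u) \<sigma>) ` Uc G i) \<in> (\<lambda>\<rho>. Qval G J i \<rho> \<sigma>) ` Ubar G i"
    using u(2) by auto
next
  fix x assume "x \<in> (\<lambda>\<rho>. Qval G J i \<rho> \<sigma>) ` Ubar G i"
  then show "Min ((\<lambda>u. Qval G J i (return_pmf u) \<sigma>) ` Uc G i) \<le> x"
    using Min_return_le_Qval[OF assms] by auto
qed

lemma Tmu_eq_Max: "wf_game G \<Longrightarrow> i \<in> St G \<Longrightarrow> Tmu G \<mu> J i = Max ((\<lambda>v. Qval G J i (\<mu> i) (return_pmf v)) ` Vc G i)"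
  unfolding Tmu_def by (rule SUP_Vbar_Qval)

lemma Tnu_eq_Min: "wf_game G \<Longrightarrow> i \<in> St G \<Longrightarrow> Tnu G \<nu> J i = Min ((\<lambda>u. Qval G J i (return_pmf u) (\<nu> i)) ` Uc G i)"
  unfolding Tnu_def by (rule INF_Ubar_Qval)

lemma Qval_le_Tmu: "wf_game G \<Longrightarrow> i \<in> St G \<Longrightarrow> \<sigma> \<in> Vbar G i \<Longrightarrow> Qval G J i (\<mu> i) \<sigma> \<le> Tmu G \<mu> J i"
  using Qval_le_Max_return Tmu_eq_Max by metis

lemma Tnu_le_Qval: "wf_game G \<Longrightarrow> i \<in> St G \<Longrightarrow> \<rho> \<in> Ubar G i \<Longrightarrow> Tnu G \<nu> J i \<le> Qval G J i \<rho> (\<nu> i)"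
  using Min_return_le_Qval Tnu_eq_Min by metis

lemma Tmu_attained:
  assumes "wf_game G" "i \<in> St G"
  shows "\<exists>v\<in>Vc G i. Tmu G \<mu> J i = Qval G J i (\<mu> i) (return_pmf v)"
proof -
  have "Max ((\<lambda>v. Qval G J i (\<mu> i) (return_pmf v)) ` Vc G i) \<in> (\<lambda>v. Qval G J i (\<mu> i) (return_pmf v)) ` Vc G i"
    using wf_game_finite[OF assms] by (intro Max_in) auto
  then show ?thesis unfolding Tmu_eq_Max[OF assms] by auto
qed

lemma Tnu_attained:
  assumes "wf_game G" "i \<in> St G"
  shows "\<exists>u\<in>Uc G i. Tnu G \<nu> J i = Qval G J i (return_pmf u) (\<nu> i)"
proof -
  have "Min ((\<lambda>u. Qval G J i (return_pmf u) (\<nu> i)) ` Uc G i) \<in> (\<lambda>u. Qval G J i (return_pmf u) (\<nu> i)) ` Uc G i"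
    using wf_game_finite[OF assms] by (intro Min_in) auto
  then show ?thesis unfolding Tnu_eq_Min[OF assms] by auto
qed

lemma Qval_mono:
  assumes wf: "wf_game G" and i: "i \<in> St G" and r: "\<rho> \<in> Ubar G i" and s: "\<sigma> \<in> Vbar G i"
    and le: "\<And>j. j \<in> St G \<Longrightarrow> J j \<le> J' j"
  shows "Qval G J i \<rho> \<sigma> \<le> Qval G J' i \<rho> \<sigma>"
  unfolding Qval_eq_affine using mixed_kernel_bounds(1)[OF wf i r s] le by (auto intro!: sum_mono mult_left_mono)

lemma Qval_nonexpansive:
  assumes wf: "wf_game G" and i: "i \<in> St G" and r: "\<rho> \<in> Ubar G i" and s: "\<sigma> \<in> Vbar G i"
    and le: "\<And>j. j \<in> St G \<Longrightarrow> \<bar>J j - J' j\<bar> \<le> e"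
  shows "\<bar>Qval G J i \<rho> \<sigma> - Qval G J' i \<rho> \<sigma>\<bar> \<le> e"
proof -
  have "\<bar>J i - J' i\<bar> \<le> e" by (rule le[OF i])
  then have e0: "0 \<le> e" by linarith
  have "\<bar>Qval G J i \<rho> \<sigma> - Qval G J' i \<rho> \<sigma>\<bar> = \<bar>\<Sum>j\<in>St G. mixed_kernel G \<rho> \<sigma> i j * (J j - J' j)\<bar>"
    unfolding Qval_eq_affine by (simp add: sum_subtractf algebra_simps)
  also have "\<dots> \<le> (\<Sum>j\<in>St G. \<bar>mixed_kernel G \<rho> \<sigma> i j * (J j - J' j)\<bar>)" by (rule sum_abs)
  also have "\<dots> \<le> (\<Sum>j\<in>St G. mixed_kernel G \<rho> \<sigma> i j * e)"
  proof (rule sum_mono)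
    fix j assume j: "j \<in> St G"
    have "0 \<le> mixed_kernel G \<rho> \<sigma> i j" using mixed_kernel_bounds(1)[OF wf i r s] j by blast
    then show "\<bar>mixed_kernel G \<rho> \<sigma> i j * (J j - J' j)\<bar> \<le> mixed_kernel G \<rho> \<sigma> i j * e"
      using le[OF j] by (simp add: abs_mult mult_left_mono)
  qed
  also have "\<dots> = (\<Sum>j\<in>St G. mixed_kernel G \<rho> \<sigma> i j) * e" by (simp add: sum_distrib_right)
  also have "\<dots> \<le> 1 * e" using mixed_kernel_bounds(2)[OF wf i r s] e0 by (intro mult_right_mono) simp_all
  finally show ?thesis by simp
qed

lemma pmf_of_prob_simplex:
  fixes x :: "'a \<Rightarrow> real"
  assumes U: "finite U" and x: "x \<in> prob_simplex U"
  obtains \<rho> where "set_pmf \<rho> \<subseteq> U" "\<And>u. u \<in> U \<Longrightarrow> pmf \<rho> u = x u"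
proof -
  define f where "f u = (if u \<in> U then x u else 0)" for u
  have f0: "0 \<le> f u" for u using x by (auto simp: f_def prob_simplex_def)
  have "(\<integral>\<^sup>+ u. ennreal (f u) \<partial>count_space UNIV) = (\<Sum>u\<in>U. ennreal (f u))"
    by (rule nn_integral_count_space'[OF U]) (auto simp: f_def)
  also have "\<dots> = ennreal (\<Sum>u\<in>U. f u)" by (rule sum_ennreal) (rule f0)
  also have "(\<Sum>u\<in>U. f u) = 1" using x by (simp add: f_def prob_simplex_def)
  finally have pmf_f: "pmf (embed_pmf f) u = f u" for u using pmf_embed_pmf[OF f0] by simp
  then have "set_pmf (embed_pmf f) \<subseteq> U" unfolding set_pmf_eq by (auto simp: f_def)
  then show ?thesis using that pmf_f by (simp add: f_def)
qed

text \<open>The optimal mixed strategies of the matrix game \<open>payoff G J i\<close> are a saddle point of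
  its bilinear extension \<open>Qval G J i\<close>.\<close>

lemma Qval_saddle_point:
  assumes wf: "wf_game G" and i: "i \<in> St G"
  obtains \<rho> \<sigma> w where "\<rho> \<in> Ubar G i" "\<sigma> \<in> Vbar G i"
    "\<And>\<sigma>'. \<sigma>' \<in> Vbar G i \<Longrightarrow> Qval G J i \<rho> \<sigma>' \<le> w" "\<And>\<rho>'. \<rho>' \<in> Ubar G i \<Longrightarrow> w \<le> Qval G J i \<rho>' \<sigma>"
proof -
  note fin = wf_game_finite[OF wf i]
  obtain x y w where x: "x \<in> prob_simplex (Uc G i)" and y: "y \<in> prob_simplex (Vc G i)"
    and xw: "\<forall>v\<in>Vc G i. (\<Sum>u\<in>Uc G i. x u * payoff G J i u v) \<le> w"
    and yw: "\<forall>u\<in>Uc G i. w \<le> (\<Sum>v\<in>Vc G i. y v * payoff G J i u v)"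
    using mixed_saddle_exists[OF fin, of "payoff G J i"] unfolding mixed_saddle_def by blast
  obtain \<rho> where \<rho>: "set_pmf \<rho> \<subseteq> Uc G i" "\<And>u. u \<in> Uc G i \<Longrightarrow> pmf \<rho> u = x u"
    using pmf_of_prob_simplex[OF fin(1) x] by blast
  obtain \<sigma> where \<sigma>: "set_pmf \<sigma> \<subseteq> Vc G i" "\<And>v. v \<in> Vc G i \<Longrightarrow> pmf \<sigma> v = y v"
    using pmf_of_prob_simplex[OF fin(3) y] by blast
  show ?thesis
  proof (rule that)
    show "\<rho> \<in> Ubar G i" "\<sigma> \<in> Vbar G i" using \<rho>(1) \<sigma>(1) by (simp_all add: Ubar_def Vbar_def)
    show "Qval G J i \<rho> \<sigma>' \<le> w" if "\<sigma>' \<in> Vbar G i" for \<sigma>'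
    proof -
      have "Qval G J i \<rho> \<sigma>' = (\<Sum>v\<in>Vc G i. pmf \<sigma>' v * (\<Sum>u\<in>Uc G i. x u * payoff G J i u v))"
        unfolding Qval_eq_bilinear
        by (subst sum_bilinear_swap[symmetric]) (simp add: \<rho>(2) cong: sum.cong)
      also have "\<dots> \<le> (\<Sum>v\<in>Vc G i. pmf \<sigma>' v * w)" using xw by (intro sum_mono mult_left_mono) auto
      also have "\<dots> = w"
        using that fin sum_pmf_eq_1[of "Vc G i" \<sigma>'] by (simp add: Vbar_def sum_distrib_right[symmetric])
      finally show ?thesis .
    qed
    show "w \<le> Qval G J i \<rho>' \<sigma>" if "\<rho>' \<in> Ubar G i" for \<rho>'
    proof -
      have "w = (\<Sum>u\<in>Uc G i. pmf \<rho>' u * w)"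
        using that fin sum_pmf_eq_1[of "Uc G i" \<rho>'] by (simp add: Ubar_def sum_distrib_right[symmetric])
      also have "\<dots> \<le> (\<Sum>u\<in>Uc G i. pmf \<rho>' u * (\<Sum>v\<in>Vc G i. y v * payoff G J i u v))"
        using yw by (intro sum_mono mult_left_mono) auto
      also have "\<dots> = Qval G J i \<rho>' \<sigma>"
        unfolding Qval_eq_bilinear by (simp add: \<sigma>(2) cong: sum.cong)
      finally show ?thesis .
    qed
  qed
qed

lemma INF_SUP_eq_saddle_value:
  fixes f :: "'a \<Rightarrow> 'b \<Rightarrow> real"
  assumes "\<rho>0 \<in> A" "\<sigma>0 \<in> B" "\<And>\<sigma>. \<sigma> \<in> B \<Longrightarrow> f \<rho>0 \<sigma> \<le> w" "\<And>\<rho>. \<rho> \<in> A \<Longrightarrow> w \<le> f \<rho> \<sigma>0"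
    and "\<And>\<rho>. \<rho> \<in> A \<Longrightarrow> bdd_above (f \<rho> ` B)"
  shows "(INF \<rho>\<in>A. SUP \<sigma>\<in>B. f \<rho> \<sigma>) = w"
proof -
  have upper: "(SUP \<sigma>\<in>B. f \<rho>0 \<sigma>) \<le> w" using assms(2,3) by (intro cSUP_least) auto
  have lower: "w \<le> (SUP \<sigma>\<in>B. f \<rho> \<sigma>)" if "\<rho> \<in> A" for \<rho>
    using assms(4)[OF that] cSUP_upper[OF assms(2) assms(5)[OF that]] by linarith
  have "bdd_below ((\<lambda>\<rho>. SUP \<sigma>\<in>B. f \<rho> \<sigma>) ` A)" by (rule bdd_belowI2) (rule lower)
  then have "(INF \<rho>\<in>A. SUP \<sigma>\<in>B. f \<rho> \<sigma>) \<le> (SUP \<sigma>\<in>B. f \<rho>0 \<sigma>)" by (rule cINF_lower[OF _ assms(1)])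
  moreover have "w \<le> (INF \<rho>\<in>A. SUP \<sigma>\<in>B. f \<rho> \<sigma>)" using assms(1) lower by (intro cINF_greatest) auto
  ultimately show ?thesis using upper by linarith
qed

lemma Top_saddle:
  assumes wf: "wf_game G" and i: "i \<in> St G"
  shows "\<exists>\<rho>\<in>Ubar G i. \<exists>\<sigma>\<in>Vbar G i. (\<forall>\<sigma>'\<in>Vbar G i. Qval G J i \<rho> \<sigma>' \<le> Top G J i) \<and>
            (\<forall>\<rho>'\<in>Ubar G i. Top G J i \<le> Qval G J i \<rho>' \<sigma>)"
proof -
  obtain \<rho> \<sigma> w where saddle: "\<rho> \<in> Ubar G i" "\<sigma> \<in> Vbar G i"
    "\<And>\<sigma>'. \<sigma>' \<in> Vbar G i \<Longrightarrow> Qval G J i \<rho> \<sigma>' \<le> w" "\<And>\<rho>'. \<rho>' \<in> Ubar G i \<Longrightarrow> w \<le> Qval G J i \<rho>' \<sigma>"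
    using Qval_saddle_point[OF wf i] by blast
  have "bdd_above (Qval G J i \<rho>' ` Vbar G i)" for \<rho>'
    by (rule bdd_aboveI2) (rule Qval_le_Max_return[OF wf i])
  then have "Top G J i = w"
    unfolding Top_def using saddle by (intro INF_SUP_eq_saddle_value[where f="Qval G J i"]) auto
  then show ?thesis using saddle by blast
qed

lemma Top_monotone:
  assumes wf: "wf_game G"
  shows "monotone_op (St G) (Top G)"
  unfolding monotone_op_def
proof (intro allI impI ballI)
  fix J J' :: "nat \<Rightarrow> real" and i assume le: "\<forall>j\<in>St G. J j \<le> J' j" and i: "i \<in> St G"
  obtain \<rho> \<sigma> where rs: "\<rho> \<in> Ubar G i" "\<sigma> \<in> Vbar G i" "\<forall>\<rho>'\<in>Ubar G i. Top G J i \<le> Qval G J i \<rho>' \<sigma>"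
    using Top_saddle[OF wf i, of J] by blast
  obtain \<rho>' \<sigma>' where rs': "\<rho>' \<in> Ubar G i" "\<sigma>' \<in> Vbar G i" "\<forall>\<sigma>''\<in>Vbar G i. Qval G J' i \<rho>' \<sigma>'' \<le> Top G J' i"
    using Top_saddle[OF wf i, of J'] by blast
  have "Top G J i \<le> Qval G J i \<rho>' \<sigma>" using rs(3) rs'(1) by blast
  also have "\<dots> \<le> Qval G J' i \<rho>' \<sigma>" by (rule Qval_mono[OF wf i rs'(1) rs(2)]) (use le in blast)
  also have "\<dots> \<le> Top G J' i" using rs'(3) rs(2) by blast
  finally show "Top G J i \<le> Top G J' i" .
qed

lemma Top_nonexpansive:
  assumes wf: "wf_game G"
  shows "nonexpansive_op (St G) (Top G)"
  unfolding nonexpansive_op_def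
proof (intro allI impI ballI)
  fix J J' :: "nat \<Rightarrow> real" and e i assume le: "\<forall>j\<in>St G. \<bar>J j - J' j\<bar> \<le> e" and i: "i \<in> St G"
  have le': "\<forall>j\<in>St G. \<bar>J' j - J j\<bar> \<le> e" using le by (simp add: abs_minus_commute)
  obtain \<rho> \<sigma> where rs: "\<rho> \<in> Ubar G i" "\<sigma> \<in> Vbar G i" "\<forall>\<rho>'\<in>Ubar G i. Top G J i \<le> Qval G J i \<rho>' \<sigma>"
     "\<forall>\<sigma>'\<in>Vbar G i. Qval G J i \<rho> \<sigma>' \<le> Top G J i"
    using Top_saddle[OF wf i, of J] by blast
  obtain \<rho>' \<sigma>' where rs': "\<rho>' \<in> Ubar G i" "\<sigma>' \<in> Vbar G i" "\<forall>\<sigma>''\<in>Vbar G i. Qval G J' i \<rho>' \<sigma>'' \<le> Top G J' i"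
     "\<forall>\<rho>''\<in>Ubar G i. Top G J' i \<le> Qval G J' i \<rho>'' \<sigma>'"
    using Top_saddle[OF wf i, of J'] by blast
  have a1: "Top G J i \<le> Qval G J i \<rho>' \<sigma>" using rs(3) rs'(1) by blast
  have a2: "Qval G J' i \<rho>' \<sigma> \<le> Top G J' i" using rs'(3) rs(2) by blast
  have a3: "\<bar>Qval G J i \<rho>' \<sigma> - Qval G J' i \<rho>' \<sigma>\<bar> \<le> e" by (rule Qval_nonexpansive[OF wf i rs'(1) rs(2)]) (use le in blast)
  have b1: "Top G J' i \<le> Qval G J' i \<rho> \<sigma>'" using rs'(4) rs(1) by blast
  have b2: "Qval G J i \<rho> \<sigma>' \<le> Top G J i" using rs(4) rs'(2) by blast
  have b3: "\<bar>Qval G J' i \<rho> \<sigma>' - Qval G J i \<rho> \<sigma>'\<bar> \<le> e" by (rule Qval_nonexpansive[OF wf i rs(1) rs'(2)]) (use le' in blast)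
  show "\<bar>Top G J i - Top G J' i\<bar> \<le> e" using a1 a2 a3 b1 b2 b3 by linarith
qed

lemma Top_le_Tmu:
  assumes wf: "wf_game G" and i: "i \<in> St G" and m: "\<mu> \<in> SR1 G"
  shows "Top G J i \<le> Tmu G \<mu> J i"
proof -
  obtain \<sigma> where s: "\<sigma> \<in> Vbar G i" "\<forall>\<rho>'\<in>Ubar G i. Top G J i \<le> Qval G J i \<rho>' \<sigma>"
    using Top_saddle[OF wf i, of J] by blast
  have "Top G J i \<le> Qval G J i (\<mu> i) \<sigma>" using s(2) SR1_Ubar[OF m i] by blast
  also have "\<dots> \<le> Tmu G \<mu> J i" by (rule Qval_le_Tmu[OF wf i s(1)])
  finally show ?thesis .
qed

lemma Tnu_le_Top:
  assumes wf: "wf_game G" and i: "i \<in> St G" and n: "\<nu> \<in> SR2 G"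
  shows "Tnu G \<nu> J i \<le> Top G J i"
proof -
  obtain \<rho> where r: "\<rho> \<in> Ubar G i" "\<forall>\<sigma>'\<in>Vbar G i. Qval G J i \<rho> \<sigma>' \<le> Top G J i"
    using Top_saddle[OF wf i, of J] by blast
  have "Tnu G \<nu> J i \<le> Qval G J i \<rho> (\<nu> i)" by (rule Tnu_le_Qval[OF wf i r(1)])
  also have "\<dots> \<le> Top G J i" using r(2) SR2_Vbar[OF n i] by blast
  finally show ?thesis .
qed

lemma Tmu_monotone:
  assumes wf: "wf_game G" and m: "\<mu> \<in> SR1 G"
  shows "monotone_op (St G) (Tmu G \<mu>)"
  unfolding monotone_op_def
proof (intro allI impI ballI)
  fix J J' :: "nat \<Rightarrow> real" and i assume le: "\<forall>j\<in>St G. J j \<le> J' j" and i: "i \<in> St G"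
  obtain v where v: "v \<in> Vc G i" "Tmu G \<mu> J i = Qval G J i (\<mu> i) (return_pmf v)" using Tmu_attained[OF wf i] by blast
  have rv: "return_pmf v \<in> Vbar G i" using v(1) by (simp add: Vbar_def)
  have "Qval G J i (\<mu> i) (return_pmf v) \<le> Qval G J' i (\<mu> i) (return_pmf v)"
    by (rule Qval_mono[OF wf i SR1_Ubar[OF m i] rv]) (use le in blast)
  also have "\<dots> \<le> Tmu G \<mu> J' i" by (rule Qval_le_Tmu[OF wf i rv])
  finally show "Tmu G \<mu> J i \<le> Tmu G \<mu> J' i" using v(2) by simp
qed

lemma Tnu_monotone:
  assumes wf: "wf_game G" and n: "\<nu> \<in> SR2 G"
  shows "monotone_op (St G) (Tnu G \<nu>)"
  unfolding monotone_op_def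
proof (intro allI impI ballI)
  fix J J' :: "nat \<Rightarrow> real" and i assume le: "\<forall>j\<in>St G. J j \<le> J' j" and i: "i \<in> St G"
  obtain u where u: "u \<in> Uc G i" "Tnu G \<nu> J' i = Qval G J' i (return_pmf u) (\<nu> i)" using Tnu_attained[OF wf i] by blast
  have ru: "return_pmf u \<in> Ubar G i" using u(1) by (simp add: Ubar_def)
  have "Tnu G \<nu> J i \<le> Qval G J i (return_pmf u) (\<nu> i)" by (rule Tnu_le_Qval[OF wf i ru])
  also have "\<dots> \<le> Qval G J' i (return_pmf u) (\<nu> i)"
    by (rule Qval_mono[OF wf i ru SR2_Vbar[OF n i]]) (use le in blast)
  finally show "Tnu G \<nu> J i \<le> Tnu G \<nu> J' i" using u(2) by simp
qed

section \<open>Stationary policy pairs\<close>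

definition stat_kernel :: "('u,'v) ssp_game \<Rightarrow> (nat \<Rightarrow> 'u pmf) \<Rightarrow> (nat \<Rightarrow> 'v pmf) \<Rightarrow> nat \<Rightarrow> nat \<Rightarrow> real" where
  "stat_kernel G \<mu> \<nu> = (\<lambda>i j. mixed_kernel G (\<mu> i) (\<nu> i) i j)"

definition stat_cost :: "('u,'v) ssp_game \<Rightarrow> (nat \<Rightarrow> 'u pmf) \<Rightarrow> (nat \<Rightarrow> 'v pmf) \<Rightarrow> nat \<Rightarrow> real" where
  "stat_cost G \<mu> \<nu> = (\<lambda>i. mixed_cost G (\<mu> i) (\<nu> i) i)"

lemma stat_substochastic:
  assumes "wf_game G" "\<mu> \<in> SR1 G" "\<nu> \<in> SR2 G"
  shows "substochastic (St G) (stat_kernel G \<mu> \<nu>)"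
  using mixed_kernel_bounds[OF assms(1) _ SR1_Ubar[OF assms(2)] SR2_Vbar[OF assms(3)]] St_finite
  unfolding substochastic_def stat_kernel_def by blast

lemma stat_app: "stat \<mu> h i = \<mu> i" by (simp add: stat_def)

lemma costN_at_zero: "costN G \<pi>1 \<pi>2 k h 0 = 0"
  by (cases k) auto

lemma survN_at_zero: "survN G \<pi>1 \<pi>2 k h 0 = 0"
  by (cases k) auto

lemma costN_Suc_St:
  assumes "i \<in> St G"
  shows "costN G \<pi>1 \<pi>2 (Suc k) h i = (\<Sum>u\<in>Uc G i. \<Sum>v\<in>Vc G i. pmf (\<pi>1 h i) u * pmf (\<pi>2 h i) v *
            (gcost G i u v + (\<Sum>j\<in>St G. tp G i u v j * costN G \<pi>1 \<pi>2 k (h @ [(i,u,v)]) j)))"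
proof -
  have i0: "i \<noteq> 0" using assms by (rule St_nonzero)
  have e: "(\<Sum>j\<in>So G. tp G i u v j * (tc G i u v j + costN G \<pi>1 \<pi>2 k (h @ [(i,u,v)]) j))
        = gcost G i u v + (\<Sum>j\<in>St G. tp G i u v j * costN G \<pi>1 \<pi>2 k (h @ [(i,u,v)]) j)" for u v
  proof -
    have "(\<Sum>j\<in>So G. tp G i u v j * (tc G i u v j + costN G \<pi>1 \<pi>2 k (h @ [(i,u,v)]) j))
        = gcost G i u v + (\<Sum>j\<in>So G. tp G i u v j * costN G \<pi>1 \<pi>2 k (h @ [(i,u,v)]) j)"
      unfolding gcost_def by (simp add: distrib_left sum.distrib)
    also have "(\<Sum>j\<in>So G. tp G i u v j * costN G \<pi>1 \<pi>2 k (h @ [(i,u,v)]) j)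
        = (\<Sum>j\<in>St G. tp G i u v j * costN G \<pi>1 \<pi>2 k (h @ [(i,u,v)]) j)"
      unfolding So_eq_insert_St by (simp add: sum.insert[OF St_finite zero_notin_St] costN_at_zero)
    finally show ?thesis .
  qed
  show ?thesis using i0 by (simp add: e)
qed

lemma survN_Suc_St:
  assumes "i \<in> St G"
  shows "survN G \<pi>1 \<pi>2 (Suc k) h i = (\<Sum>u\<in>Uc G i. \<Sum>v\<in>Vc G i. pmf (\<pi>1 h i) u * pmf (\<pi>2 h i) v *
            (\<Sum>j\<in>St G. tp G i u v j * survN G \<pi>1 \<pi>2 k (h @ [(i,u,v)]) j))"
proof -
  have i0: "i \<noteq> 0" using assms by (rule St_nonzero)
  have e: "(\<Sum>j\<in>So G. tp G i u v j * survN G \<pi>1 \<pi>2 k (h @ [(i,u,v)]) j)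
        = (\<Sum>j\<in>St G. tp G i u v j * survN G \<pi>1 \<pi>2 k (h @ [(i,u,v)]) j)" for u v
    unfolding So_eq_insert_St by (simp add: sum.insert[OF St_finite zero_notin_St] survN_at_zero)
  show ?thesis using i0 by (simp add: e)
qed

lemma costN_stat:
  assumes "i \<in> St G"
  shows "costN G (stat \<mu>) (stat \<nu>) k h i = (affine_op (St G) (stat_kernel G \<mu> \<nu>) (stat_cost G \<mu> \<nu>) ^^ k) (\<lambda>_. 0) i"
  using assms
proof (induction k arbitrary: h i)
  case 0 then show ?case by simp
next
  case (Suc k)
  have "costN G (stat \<mu>) (stat \<nu>) (Suc k) h i = (\<Sum>u\<in>Uc G i. \<Sum>v\<in>Vc G i. pmf (\<mu> i) u * pmf (\<nu> i) v *
            (gcost G i u v + (\<Sum>j\<in>St G. tp G i u v j * (affine_op (St G) (stat_kernel G \<mu> \<nu>) (stat_cost G \<mu> \<nu>) ^^ k) (\<lambda>_. 0) j)))"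
    unfolding costN_Suc_St[OF Suc.prems] by (simp add: stat_app Suc.IH cong: sum.cong)
  also have "\<dots> = (affine_op (St G) (stat_kernel G \<mu> \<nu>) (stat_cost G \<mu> \<nu>) ^^ Suc k) (\<lambda>_. 0) i"
    unfolding sum_Qval_eq_affine by (simp add: affine_op_def stat_kernel_def stat_cost_def)
  finally show ?case .
qed

lemma survN_stat:
  assumes "i \<in> St G"
  shows "survN G (stat \<mu>) (stat \<nu>) k h i = survival (St G) (stat_kernel G \<mu> \<nu>) k i"
  using assms
proof (induction k arbitrary: h i)
  case 0 then show ?case using St_nonzero[OF 0] by (simp add: survival_def)
next
  case (Suc k)
  have "survN G (stat \<mu>) (stat \<nu>) (Suc k) h i = (\<Sum>u\<in>Uc G i. \<Sum>v\<in>Vc G i. pmf (\<mu> i) u * pmf (\<nu> i) v *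
            (\<Sum>j\<in>St G. tp G i u v j * survival (St G) (stat_kernel G \<mu> \<nu>) k j))"
    unfolding survN_Suc_St[OF Suc.prems] by (simp add: stat_app Suc.IH cong: sum.cong)
  also have "\<dots> = (\<Sum>j\<in>St G. stat_kernel G \<mu> \<nu> i j * survival (St G) (stat_kernel G \<mu> \<nu>) k j)"
    unfolding stat_kernel_def mixed_kernel_def sum_distrib_right sum_distrib_left
    by (subst sum.swap, rule sum.cong[OF refl], subst sum.swap, rule sum.cong[OF refl], rule sum.cong[OF refl]) (simp add: mult.assoc)
  also have "\<dots> = survival (St G) (stat_kernel G \<mu> \<nu>) (Suc k) i" by (simp add: survival_def kernel_op_def)
  finally show ?case .
qed

lemma Jc_le_if_tendsto:
  assumes "\<And>k. costN G \<pi>1 \<pi>2 k [] i \<le> a k" "a \<longlonglongrightarrow> L"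
  shows "Jc G \<pi>1 \<pi>2 i \<le> ereal L"
proof -
  have "Jc G \<pi>1 \<pi>2 i \<le> liminf (\<lambda>t. ereal (a (Suc t)))"
    unfolding Jc_def by (rule Liminf_mono) (use assms(1) in \<open>simp del: costN.simps\<close>)
  also have "liminf (\<lambda>t. ereal (a (Suc t))) = ereal L"
    by (rule lim_imp_Liminf) (simp_all add: tendsto_ereal LIMSEQ_Suc[OF assms(2)])
  finally show ?thesis .
qed

lemma Jc_ge_if_tendsto:
  assumes "\<And>k. a k \<le> costN G \<pi>1 \<pi>2 k [] i" "a \<longlonglongrightarrow> L"
  shows "ereal L \<le> Jc G \<pi>1 \<pi>2 i"
proof -
  have "ereal L = liminf (\<lambda>t. ereal (a (Suc t)))"
    by (rule lim_imp_Liminf[symmetric]) (simp_all add: tendsto_ereal LIMSEQ_Suc[OF assms(2)])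
  also have "\<dots> \<le> Jc G \<pi>1 \<pi>2 i"
    unfolding Jc_def by (rule Liminf_mono) (use assms(1) in \<open>simp del: costN.simps\<close>)
  finally show ?thesis .
qed

lemma Jc_eq_minf_unbounded:
  assumes "Jc G \<pi>1 \<pi>2 i = -\<infinity>"
  shows "\<not> bdd_below (range (\<lambda>k. costN G \<pi>1 \<pi>2 k [] i))"
proof
  assume "bdd_below (range (\<lambda>k. costN G \<pi>1 \<pi>2 k [] i))"
  then obtain B where B: "\<And>k. B \<le> costN G \<pi>1 \<pi>2 k [] i" by (auto simp: bdd_below_def)
  have "ereal B \<le> Jc G \<pi>1 \<pi>2 i"
    unfolding Jc_def by (rule Liminf_bounded) (use B in \<open>simp del: costN.simps\<close>)
  then show False using assms by simp
qed

lemma Jc_eq_pinf_unbounded: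
  assumes "Jc G \<pi>1 \<pi>2 i = \<infinity>"
  shows "\<not> bdd_above (range (\<lambda>k. costN G \<pi>1 \<pi>2 k [] i))"
proof
  assume "bdd_above (range (\<lambda>k. costN G \<pi>1 \<pi>2 k [] i))"
  then obtain B where B: "\<And>k. costN G \<pi>1 \<pi>2 k [] i \<le> B" by (auto simp: bdd_above_def)
  have "Jc G \<pi>1 \<pi>2 i \<le> limsup (\<lambda>t. ereal (costN G \<pi>1 \<pi>2 (Suc t) [] i))"
    unfolding Jc_def by (rule Liminf_le_Limsup) simp
  also have "\<dots> \<le> ereal B" by (rule Limsup_bounded) (use B in \<open>simp del: costN.simps\<close>)
  finally show False using assms by simp
qed

lemma prolonging_stat_iff:
  "prolonging G (stat \<mu>) (stat \<nu>) \<longleftrightarrow> \<not> transient (St G) (stat_kernel G \<mu> \<nu>)"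
proof -
  have "(INF t. survN G (stat \<mu>) (stat \<nu>) t [] i) = (INF k. survival (St G) (stat_kernel G \<mu> \<nu>) k i)"
    if "i \<in> St G" for i
    using survN_stat[OF that] by simp
  then show ?thesis unfolding prolonging_def transient_def by (auto simp: not_le cong: bex_cong)
qed

lemma costN_le_funpow_Tmu:
  assumes wf: "wf_game G" and m: "\<mu> \<in> SR1 G" and p: "\<pi>2 \<in> Pol2 G" and i: "i \<in> St G"
  shows "costN G (stat \<mu>) \<pi>2 k h i \<le> (Tmu G \<mu> ^^ k) (\<lambda>_. 0) i"
  using i
proof (induction k arbitrary: h i)
  case 0 then show ?case by simp
next
  case (Suc k)
  let ?W = "(Tmu G \<mu> ^^ k) (\<lambda>_. 0)"
  have sv: "\<pi>2 h i \<in> Vbar G i" using p Suc.prems by (simp add: Pol2_def Vbar_def)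
  have "costN G (stat \<mu>) \<pi>2 (Suc k) h i = (\<Sum>u\<in>Uc G i. \<Sum>v\<in>Vc G i. pmf (\<mu> i) u * pmf (\<pi>2 h i) v *
            (gcost G i u v + (\<Sum>j\<in>St G. tp G i u v j * costN G (stat \<mu>) \<pi>2 k (h @ [(i,u,v)]) j)))"
    by (simp only: costN_Suc_St[OF Suc.prems] stat_app)
  also have "\<dots> \<le> (\<Sum>u\<in>Uc G i. \<Sum>v\<in>Vc G i. pmf (\<mu> i) u * pmf (\<pi>2 h i) v *
            (gcost G i u v + (\<Sum>j\<in>St G. tp G i u v j * ?W j)))"
  proof (rule sum_mono, rule sum_mono)
    fix u v assume u: "u \<in> Uc G i" and v: "v \<in> Vc G i"
    have "(\<Sum>j\<in>St G. tp G i u v j * costN G (stat \<mu>) \<pi>2 k (h @ [(i,u,v)]) j) \<le> (\<Sum>j\<in>St G. tp G i u v j * ?W j)"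
    proof (rule sum_mono)
      fix j assume j: "j \<in> St G"
      have "0 \<le> tp G i u v j" using wf_game_tp_nonneg[OF wf Suc.prems u v] j St_subset_So by blast
      then show "tp G i u v j * costN G (stat \<mu>) \<pi>2 k (h @ [(i,u,v)]) j \<le> tp G i u v j * ?W j"
        using Suc.IH[OF j] by (intro mult_left_mono) auto
    qed
    then show "pmf (\<mu> i) u * pmf (\<pi>2 h i) v * (gcost G i u v + (\<Sum>j\<in>St G. tp G i u v j * costN G (stat \<mu>) \<pi>2 k (h @ [(i,u,v)]) j))
        \<le> pmf (\<mu> i) u * pmf (\<pi>2 h i) v * (gcost G i u v + (\<Sum>j\<in>St G. tp G i u v j * ?W j))"
      by (intro mult_left_mono add_left_mono) auto
  qed
  also have "\<dots> = Qval G ?W i (\<mu> i) (\<pi>2 h i)" unfolding Qval_def ..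
  also have "\<dots> \<le> Tmu G \<mu> ?W i" by (rule Qval_le_Tmu[OF wf Suc.prems sv])
  finally show ?case by simp
qed

lemma funpow_Tnu_le_costN:
  assumes wf: "wf_game G" and n: "\<nu> \<in> SR2 G" and p: "\<pi>1 \<in> Pol1 G" and i: "i \<in> St G"
  shows "(Tnu G \<nu> ^^ k) (\<lambda>_. 0) i \<le> costN G \<pi>1 (stat \<nu>) k h i"
  using i
proof (induction k arbitrary: h i)
  case 0 then show ?case by simp
next
  case (Suc k)
  let ?W = "(Tnu G \<nu> ^^ k) (\<lambda>_. 0)"
  have su: "\<pi>1 h i \<in> Ubar G i" using p Suc.prems by (simp add: Pol1_def Ubar_def)
  have "(Tnu G \<nu> ^^ Suc k) (\<lambda>_. 0) i = Tnu G \<nu> ?W i" by simp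
  also have "\<dots> \<le> Qval G ?W i (\<pi>1 h i) (\<nu> i)" by (rule Tnu_le_Qval[OF wf Suc.prems su])
  also have "\<dots> = (\<Sum>u\<in>Uc G i. \<Sum>v\<in>Vc G i. pmf (\<pi>1 h i) u * pmf (\<nu> i) v *
            (gcost G i u v + (\<Sum>j\<in>St G. tp G i u v j * ?W j)))" unfolding Qval_def ..
  also have "\<dots> \<le> (\<Sum>u\<in>Uc G i. \<Sum>v\<in>Vc G i. pmf (\<pi>1 h i) u * pmf (\<nu> i) v *
            (gcost G i u v + (\<Sum>j\<in>St G. tp G i u v j * costN G \<pi>1 (stat \<nu>) k (h @ [(i,u,v)]) j)))"
  proof (rule sum_mono, rule sum_mono)
    fix u v assume u: "u \<in> Uc G i" and v: "v \<in> Vc G i"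
    have "(\<Sum>j\<in>St G. tp G i u v j * ?W j) \<le> (\<Sum>j\<in>St G. tp G i u v j * costN G \<pi>1 (stat \<nu>) k (h @ [(i,u,v)]) j)"
    proof (rule sum_mono)
      fix j assume j: "j \<in> St G"
      have "0 \<le> tp G i u v j" using wf_game_tp_nonneg[OF wf Suc.prems u v] j St_subset_So by blast
      then show "tp G i u v j * ?W j \<le> tp G i u v j * costN G \<pi>1 (stat \<nu>) k (h @ [(i,u,v)]) j"
        using Suc.IH[OF j] by (intro mult_left_mono) auto
    qed
    then show "pmf (\<pi>1 h i) u * pmf (\<nu> i) v * (gcost G i u v + (\<Sum>j\<in>St G. tp G i u v j * ?W j))
        \<le> pmf (\<pi>1 h i) u * pmf (\<nu> i) v * (gcost G i u v + (\<Sum>j\<in>St G. tp G i u v j * costN G \<pi>1 (stat \<nu>) k (h @ [(i,u,v)]) j))"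
      by (intro mult_left_mono add_left_mono) auto
  qed
  also have "\<dots> = costN G \<pi>1 (stat \<nu>) (Suc k) h i"
    by (simp only: costN_Suc_St[OF Suc.prems] stat_app)
  finally show ?case .
qed

lemma affine_op_stat_kernel: "affine_op (St G) (stat_kernel G \<mu> \<nu>) (stat_cost G \<mu> \<nu>) J i = Qval G J i (\<mu> i) (\<nu> i)"
  by (simp add: affine_op_def stat_kernel_def stat_cost_def Qval_eq_affine)

lemma stat_Pol1: "\<mu> \<in> SR1 G \<Longrightarrow> stat \<mu> \<in> Pol1 G" by (simp add: SR1_def Pol1_def stat_def)
lemma stat_Pol2: "\<nu> \<in> SR2 G \<Longrightarrow> stat \<nu> \<in> Pol2 G" by (simp add: SR2_def Pol2_def stat_def)

lemma Jc_stat_ne_pinf: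
  assumes wf: "wf_game G" and m: "\<mu> \<in> SR1 G" and n: "\<nu> \<in> SR2 G" and J: "\<forall>i\<in>St G. Tmu G \<mu> J i \<le> J i" and i: "i \<in> St G"
  shows "Jc G (stat \<mu>) (stat \<nu>) i \<noteq> \<infinity>"
proof -
  have "affine_op (St G) (stat_kernel G \<mu> \<nu>) (stat_cost G \<mu> \<nu>) J j \<le> J j" if j: "j \<in> St G" for j
    unfolding affine_op_stat_kernel using Qval_le_Tmu[OF wf j SR2_Vbar[OF n j], of J \<mu>] J j by force
  then obtain B where B: "\<forall>k. \<forall>j\<in>St G. (affine_op (St G) (stat_kernel G \<mu> \<nu>) (stat_cost G \<mu> \<nu>) ^^ k) (\<lambda>_. 0) j \<le> J j + B"
    using affine_op_funpow_zero_le[OF stat_substochastic[OF wf m n]] by blast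
  have "Jc G (stat \<mu>) (stat \<nu>) i \<le> ereal (J i + B)"
    by (rule Jc_le_if_tendsto[where a="\<lambda>_. J i + B"]) (use B i in \<open>simp_all add: costN_stat\<close>)
  then show ?thesis by auto
qed

lemma Jc_stat_ne_minf:
  assumes wf: "wf_game G" and m: "\<mu> \<in> SR1 G" and n: "\<nu> \<in> SR2 G" and J: "\<forall>i\<in>St G. J i \<le> Tnu G \<nu> J i" and i: "i \<in> St G"
  shows "Jc G (stat \<mu>) (stat \<nu>) i \<noteq> -\<infinity>"
proof -
  have "J j \<le> affine_op (St G) (stat_kernel G \<mu> \<nu>) (stat_cost G \<mu> \<nu>) J j" if j: "j \<in> St G" for j
    unfolding affine_op_stat_kernel using Tnu_le_Qval[OF wf j SR1_Ubar[OF m j], of \<nu> J] J j by force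
  then obtain B where B: "\<forall>k. \<forall>j\<in>St G. J j - B \<le> (affine_op (St G) (stat_kernel G \<mu> \<nu>) (stat_cost G \<mu> \<nu>) ^^ k) (\<lambda>_. 0) j"
    using affine_op_funpow_zero_ge[OF stat_substochastic[OF wf m n]] by blast
  have "ereal (J i - B) \<le> Jc G (stat \<mu>) (stat \<nu>) i"
    by (rule Jc_ge_if_tendsto[where a="\<lambda>_. J i - B"]) (use B i in \<open>simp_all add: costN_stat\<close>)
  then show ?thesis by auto
qed

section \<open>The single-player problems\<close>

definition prolonging_responses_minf :: "('u,'v) ssp_game \<Rightarrow> (nat \<Rightarrow> 'u pmf) \<Rightarrow> bool" where
  "prolonging_responses_minf G \<mu> \<longleftrightarrow> (\<forall>\<nu>\<in>SR2 G. prolonging G (stat \<mu>) (stat \<nu>) \<longrightarrow>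
     (\<exists>i\<in>St G. Jc G (stat \<mu>) (stat \<nu>) i = -\<infinity>))"

definition prolonging_responses_pinf :: "('u,'v) ssp_game \<Rightarrow> (nat \<Rightarrow> 'v pmf) \<Rightarrow> bool" where
  "prolonging_responses_pinf G \<nu> \<longleftrightarrow> (\<forall>\<mu>\<in>SR1 G. prolonging G (stat \<mu>) (stat \<nu>) \<longrightarrow>
     (\<exists>i\<in>St G. Jc G (stat \<mu>) (stat \<nu>) i = \<infinity>))"

definition minimizer_kernel :: "('u,'v) ssp_game \<Rightarrow> (nat \<Rightarrow> 'v pmf) \<Rightarrow> nat \<Rightarrow> 'u \<Rightarrow> nat \<Rightarrow> real" where
  "minimizer_kernel G \<nu> i u = mixed_kernel G (return_pmf u) (\<nu> i) i"

definition minimizer_cost :: "('u,'v) ssp_game \<Rightarrow> (nat \<Rightarrow> 'v pmf) \<Rightarrow> nat \<Rightarrow> 'u \<Rightarrow> real" where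
  "minimizer_cost G \<nu> i u = mixed_cost G (return_pmf u) (\<nu> i) i"

definition maximizer_kernel :: "('u,'v) ssp_game \<Rightarrow> (nat \<Rightarrow> 'u pmf) \<Rightarrow> nat \<Rightarrow> 'v \<Rightarrow> nat \<Rightarrow> real" where
  "maximizer_kernel G \<mu> i v = mixed_kernel G (\<mu> i) (return_pmf v) i"

definition maximizer_cost :: "('u,'v) ssp_game \<Rightarrow> (nat \<Rightarrow> 'u pmf) \<Rightarrow> nat \<Rightarrow> 'v \<Rightarrow> real" where
  "maximizer_cost G \<mu> i v = - mixed_cost G (\<mu> i) (return_pmf v) i"

text \<open>The deterministic policies of this MDP are the pure stationary policies of player I.\<close>

lemma Tnu_mdp:
  assumes wf: "wf_game G" and \<nu>: "\<nu> \<in> SR2 G" and H: "prolonging_responses_pinf G \<nu>"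
  shows "finite_mdp (St G) (Uc G) (minimizer_kernel G \<nu>)" "finite_mdp.improper_unbounded (St G) (Uc G) (minimizer_kernel G \<nu>) (minimizer_cost G \<nu>)"
    "\<And>J i. i \<in> St G \<Longrightarrow> finite_mdp.T (St G) (Uc G) (minimizer_kernel G \<nu>) (minimizer_cost G \<nu>) J i = Tnu G \<nu> J i"
proof -
  show mdp: "finite_mdp (St G) (Uc G) (minimizer_kernel G \<nu>)"
  proof
    fix i u j assume i: "i \<in> St G" and u: "u \<in> Uc G i"
    have "return_pmf u \<in> Ubar G i" using u by (simp add: Ubar_def)
    note bounds = mixed_kernel_bounds[OF wf i this SR2_Vbar[OF \<nu> i]]
    show "j \<in> St G \<Longrightarrow> 0 \<le> minimizer_kernel G \<nu> i u j" using bounds(1) by (simp add: minimizer_kernel_def)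
    show "(\<Sum>j\<in>St G. minimizer_kernel G \<nu> i u j) \<le> 1" using bounds(2) by (simp add: minimizer_kernel_def)
  qed (use wf_game_finite[OF wf] St_finite in auto)
  interpret M: finite_mdp "St G" "Uc G" "minimizer_kernel G \<nu>" "minimizer_cost G \<nu>" by (rule mdp)
  show "M.T J i = Tnu G \<nu> J i" if "i \<in> St G" for J i
  proof -
    have "M.Q J i u = Qval G J i (return_pmf u) (\<nu> i)" for u
      by (simp add: M.Q_def minimizer_kernel_def minimizer_cost_def Qval_eq_affine)
    then show ?thesis by (simp add: M.T_def Tnu_eq_Min[OF wf that])
  qed
  show "M.improper_unbounded"
    unfolding M.improper_unbounded_def
  proof (intro ballI impI)
    fix d assume d: "d \<in> Pi\<^sub>E (St G) (Uc G)" and not_transient: "\<not> transient (St G) (M.policy_kernel d)"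
    define \<mu> where "\<mu> i = return_pmf (d i)" for i
    have \<mu>: "\<mu> \<in> SR1 G" using d by (auto simp: SR1_def \<mu>_def PiE_iff)
    have kernel: "M.policy_kernel d = stat_kernel G \<mu> \<nu>" and cost: "M.policy_cost d = stat_cost G \<mu> \<nu>"
      by (simp_all add: fun_eq_iff M.policy_kernel_def M.policy_cost_def minimizer_kernel_def minimizer_cost_def
          stat_kernel_def stat_cost_def \<mu>_def)
    have "prolonging G (stat \<mu>) (stat \<nu>)" using not_transient by (simp add: prolonging_stat_iff kernel)
    then obtain i where i: "i \<in> St G" "Jc G (stat \<mu>) (stat \<nu>) i = \<infinity>"
      using H \<mu> unfolding prolonging_responses_pinf_def by blast
    from Jc_eq_pinf_unbounded[OF i(2)]
    have "\<not> bdd_above (range (\<lambda>k. (M.policy_op d ^^ k) (\<lambda>_. 0) i))"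
      by (simp add: kernel cost costN_stat[OF i(1)])
    with i(1) show "\<exists>i\<in>St G. \<not> bdd_above (range (\<lambda>k. (M.policy_op d ^^ k) (\<lambda>_. 0) i))" by (rule bexI[rotated])
  qed
qed

text \<open>Player II maximizes, hence the negated costs.\<close>

lemma Tmu_mdp:
  assumes wf: "wf_game G" and \<mu>: "\<mu> \<in> SR1 G" and H: "prolonging_responses_minf G \<mu>"
  shows "finite_mdp (St G) (Vc G) (maximizer_kernel G \<mu>)" "finite_mdp.improper_unbounded (St G) (Vc G) (maximizer_kernel G \<mu>) (maximizer_cost G \<mu>)"
    "\<And>J i. i \<in> St G \<Longrightarrow> finite_mdp.T (St G) (Vc G) (maximizer_kernel G \<mu>) (maximizer_cost G \<mu>) J i = - Tmu G \<mu> (\<lambda>j. - J j) i"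
proof -
  show mdp: "finite_mdp (St G) (Vc G) (maximizer_kernel G \<mu>)"
  proof
    fix i v j assume i: "i \<in> St G" and v: "v \<in> Vc G i"
    have "return_pmf v \<in> Vbar G i" using v by (simp add: Vbar_def)
    note bounds = mixed_kernel_bounds[OF wf i SR1_Ubar[OF \<mu> i] this]
    show "j \<in> St G \<Longrightarrow> 0 \<le> maximizer_kernel G \<mu> i v j" using bounds(1) by (simp add: maximizer_kernel_def)
    show "(\<Sum>j\<in>St G. maximizer_kernel G \<mu> i v j) \<le> 1" using bounds(2) by (simp add: maximizer_kernel_def)
  qed (use wf_game_finite[OF wf] St_finite in auto)
  interpret M: finite_mdp "St G" "Vc G" "maximizer_kernel G \<mu>" "maximizer_cost G \<mu>" by (rule mdp)
  show "M.T J i = - Tmu G \<mu> (\<lambda>j. - J j) i" if i: "i \<in> St G" for J i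
  proof -
    have "M.Q J i v = - Qval G (\<lambda>j. - J j) i (\<mu> i) (return_pmf v)" for v
      unfolding M.Q_def maximizer_kernel_def maximizer_cost_def Qval_eq_affine by (simp add: sum_negf)
    then have "M.T J i = Min ((\<lambda>v. - Qval G (\<lambda>j. - J j) i (\<mu> i) (return_pmf v)) ` Vc G i)"
      unfolding M.T_def by simp
    also have "\<dots> = - Max ((\<lambda>v. Qval G (\<lambda>j. - J j) i (\<mu> i) (return_pmf v)) ` Vc G i)"
      using wf_game_finite[OF wf i] by (simp add: image_image)
    finally show ?thesis by (simp only: Tmu_eq_Max[OF wf i])
  qed
  show "M.improper_unbounded"
    unfolding M.improper_unbounded_def
  proof (intro ballI impI)
    fix d assume d: "d \<in> Pi\<^sub>E (St G) (Vc G)" and not_transient: "\<not> transient (St G) (M.policy_kernel d)"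
    define \<nu> where "\<nu> i = return_pmf (d i)" for i
    have \<nu>: "\<nu> \<in> SR2 G" using d by (auto simp: SR2_def \<nu>_def PiE_iff)
    have kernel: "M.policy_kernel d = stat_kernel G \<mu> \<nu>"
      and cost: "M.policy_cost d = (\<lambda>i. - stat_cost G \<mu> \<nu> i)"
      by (simp_all add: fun_eq_iff M.policy_kernel_def M.policy_cost_def maximizer_kernel_def maximizer_cost_def
          stat_kernel_def stat_cost_def \<nu>_def)
    have "prolonging G (stat \<mu>) (stat \<nu>)" using not_transient by (simp add: prolonging_stat_iff kernel)
    then obtain i where i: "i \<in> St G" "Jc G (stat \<mu>) (stat \<nu>) i = -\<infinity>"
      using H \<nu> unfolding prolonging_responses_minf_def by blast
    from Jc_eq_minf_unbounded[OF i(2)]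
    have "\<not> bdd_above (range (\<lambda>k. (M.policy_op d ^^ k) (\<lambda>_. 0) i))"
      by (simp add: kernel cost costN_stat[OF i(1)] affine_op_funpow_zero_uminus bdd_above_uminus_image)
    with i(1) show "\<exists>i\<in>St G. \<not> bdd_above (range (\<lambda>k. (M.policy_op d ^^ k) (\<lambda>_. 0) i))" by (rule bexI[rotated])
  qed
qed

lemma Tnu_fixpoint_exists:
  assumes wf: "wf_game G" and \<nu>: "\<nu> \<in> SR2 G" and H: "prolonging_responses_pinf G \<nu>"
    and super: "\<And>i. i \<in> St G \<Longrightarrow> Tnu G \<nu> J i \<le> J i"
  obtains Js where "\<And>i. i \<in> St G \<Longrightarrow> Tnu G \<nu> Js i = Js i"
proof -
  interpret M: finite_mdp "St G" "Uc G" "minimizer_kernel G \<nu>" "minimizer_cost G \<nu>"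
    by (rule Tnu_mdp[OF wf \<nu> H])
  note T_eq = Tnu_mdp(3)[OF wf \<nu> H]
  obtain Js where "\<And>i. i \<in> St G \<Longrightarrow> M.T Js i = Js i"
    by (rule M.T_fixpoint_exists[OF Tnu_mdp(2)[OF wf \<nu> H], of J]) (simp add: T_eq super, blast)
  then show ?thesis by (intro that[of Js]) (simp add: T_eq)
qed

lemma funpow_Tnu_tendsto:
  assumes wf: "wf_game G" and \<nu>: "\<nu> \<in> SR2 G" and H: "prolonging_responses_pinf G \<nu>"
    and fixed: "\<And>i. i \<in> St G \<Longrightarrow> Tnu G \<nu> Js i = Js i" and i: "i \<in> St G"
  shows "(\<lambda>k. (Tnu G \<nu> ^^ k) J i) \<longlonglongrightarrow> Js i"
proof -
  interpret M: finite_mdp "St G" "Uc G" "minimizer_kernel G \<nu>" "minimizer_cost G \<nu>"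
    by (rule Tnu_mdp[OF wf \<nu> H])
  note T_eq = Tnu_mdp(3)[OF wf \<nu> H]
  have "(\<lambda>k. (M.T ^^ k) J i) \<longlonglongrightarrow> Js i"
    by (rule M.funpow_T_tendsto[OF Tnu_mdp(2)[OF wf \<nu> H] _ i]) (simp add: T_eq fixed)
  moreover have "(Tnu G \<nu> ^^ k) J i = (M.T ^^ k) J i" for k
    by (rule funpow_eq_on[OF M.T_monotone _ i]) (simp add: T_eq)
  ultimately show ?thesis by simp
qed

lemma Tmu_fixpoint_exists:
  assumes wf: "wf_game G" and \<mu>: "\<mu> \<in> SR1 G" and H: "prolonging_responses_minf G \<mu>"
    and sub: "\<And>i. i \<in> St G \<Longrightarrow> J i \<le> Tmu G \<mu> J i"
  obtains Js where "\<And>i. i \<in> St G \<Longrightarrow> Tmu G \<mu> Js i = Js i"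
proof -
  interpret M: finite_mdp "St G" "Vc G" "maximizer_kernel G \<mu>" "maximizer_cost G \<mu>"
    by (rule Tmu_mdp[OF wf \<mu> H])
  note T_eq = Tmu_mdp(3)[OF wf \<mu> H]
  obtain Ls where Ls: "\<And>i. i \<in> St G \<Longrightarrow> M.T Ls i = Ls i"
    by (rule M.T_fixpoint_exists[OF Tmu_mdp(2)[OF wf \<mu> H], of "\<lambda>j. - J j"]) (simp add: T_eq sub, blast)
  show ?thesis by (rule that[of "\<lambda>j. - Ls j"]) (use Ls T_eq in force)
qed

lemma funpow_Tmu_tendsto:
  assumes wf: "wf_game G" and \<mu>: "\<mu> \<in> SR1 G" and H: "prolonging_responses_minf G \<mu>"
    and fixed: "\<And>i. i \<in> St G \<Longrightarrow> Tmu G \<mu> Js i = Js i" and i: "i \<in> St G"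
  shows "(\<lambda>k. (Tmu G \<mu> ^^ k) J i) \<longlonglongrightarrow> Js i"
proof -
  interpret M: finite_mdp "St G" "Vc G" "maximizer_kernel G \<mu>" "maximizer_cost G \<mu>"
    by (rule Tmu_mdp[OF wf \<mu> H])
  note T_eq = Tmu_mdp(3)[OF wf \<mu> H]
  have "(\<lambda>k. (M.T ^^ k) (\<lambda>j. - J j) i) \<longlonglongrightarrow> - Js i"
    by (rule M.funpow_T_tendsto[OF Tmu_mdp(2)[OF wf \<mu> H] _ i]) (simp add: T_eq fixed)
  moreover have "(Tmu G \<mu> ^^ k) J i = - (M.T ^^ k) (\<lambda>j. - J j) i" for k
    by (rule funpow_uminus_conj[OF M.T_monotone _ i]) (simp add: T_eq)
  ultimately show ?thesis using tendsto_minus[of "\<lambda>k. (M.T ^^ k) (\<lambda>j. - J j) i"] by force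
qed

section \<open>Equilibrium\<close>

definition guarantees_value :: "('u,'v) ssp_game \<Rightarrow> (nat \<Rightarrow> 'u pmf) \<Rightarrow> (nat \<Rightarrow> 'v pmf) \<Rightarrow> (nat \<Rightarrow> real) \<Rightarrow> bool" where
  "guarantees_value G \<mu> \<nu> Js \<longleftrightarrow>
     (\<forall>\<pi>2\<in>Pol2 G. \<forall>i\<in>St G. Jc G (stat \<mu>) \<pi>2 i \<le> ereal (Js i)) \<and>
     (\<forall>\<pi>1\<in>Pol1 G. \<forall>i\<in>St G. ereal (Js i) \<le> Jc G \<pi>1 (stat \<nu>) i)"

lemma guarantees_valueD:
  assumes "guarantees_value G \<mu> \<nu> Js" "i \<in> St G"
  shows "\<pi>2 \<in> Pol2 G \<Longrightarrow> Jc G (stat \<mu>) \<pi>2 i \<le> ereal (Js i)"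
    and "\<pi>1 \<in> Pol1 G \<Longrightarrow> ereal (Js i) \<le> Jc G \<pi>1 (stat \<nu>) i"
  using assms unfolding guarantees_value_def by blast+

lemma guarantees_value_Jc_eq:
  assumes "guarantees_value G \<mu> \<nu> Js" "\<mu> \<in> SR1 G" "\<nu> \<in> SR2 G" "i \<in> St G"
  shows "Jc G (stat \<mu>) (stat \<nu>) i = ereal (Js i)"
  using guarantees_valueD(1)[OF assms(1,4) stat_Pol2[OF assms(3)]]
    guarantees_valueD(2)[OF assms(1,4) stat_Pol1[OF assms(2)]] by (rule antisym)

lemma guarantees_value_equilibrium:
  assumes "guarantees_value G \<mu> \<nu> Js" "\<mu> \<in> SR1 G" "\<nu> \<in> SR2 G"
  shows "equilibrium G (stat \<mu>) (stat \<nu>)"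
  unfolding equilibrium_def using guarantees_valueD[OF assms(1)] guarantees_value_Jc_eq[OF assms] by simp

lemma guarantees_value_optimal1:
  assumes "guarantees_value G \<mu> \<nu> Js" "\<mu> \<in> SR1 G" "\<nu> \<in> SR2 G"
  shows "optimal1 G (stat \<mu>)"
  unfolding optimal1_def
proof
  fix i assume i: "i \<in> St G"
  note up = guarantees_valueD(1)[OF assms(1) i] and lo = guarantees_valueD(2)[OF assms(1) i]
  have sup: "(SUP \<pi>2\<in>Pol2 G. Jc G (stat \<mu>) \<pi>2 i) = ereal (Js i)"
    using up guarantees_value_Jc_eq[OF assms i] stat_Pol2[OF assms(3)]
    by (intro antisym SUP_least) (auto intro: SUP_upper2)
  have "ereal (Js i) \<le> (SUP \<pi>2\<in>Pol2 G. Jc G \<pi>1 \<pi>2 i)" if "\<pi>1 \<in> Pol1 G" for \<pi>1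
    using lo[OF that] stat_Pol2[OF assms(3)] by (auto intro: SUP_upper2)
  then have "(INF \<pi>1\<in>Pol1 G. SUP \<pi>2\<in>Pol2 G. Jc G \<pi>1 \<pi>2 i) = ereal (Js i)"
    using sup stat_Pol1[OF assms(2)] by (intro antisym INF_greatest) (auto intro: INF_lower2)
  with sup show "(SUP \<pi>2\<in>Pol2 G. Jc G (stat \<mu>) \<pi>2 i) = (INF \<pi>1\<in>Pol1 G. SUP \<pi>2\<in>Pol2 G. Jc G \<pi>1 \<pi>2 i)"
    by simp
qed

lemma guarantees_value_optimal2:
  assumes "guarantees_value G \<mu> \<nu> Js" "\<mu> \<in> SR1 G" "\<nu> \<in> SR2 G"
  shows "optimal2 G (stat \<nu>)"
  unfolding optimal2_def
proof
  fix i assume i: "i \<in> St G"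
  note up = guarantees_valueD(1)[OF assms(1) i] and lo = guarantees_valueD(2)[OF assms(1) i]
  have inf: "(INF \<pi>1\<in>Pol1 G. Jc G \<pi>1 (stat \<nu>) i) = ereal (Js i)"
    using lo guarantees_value_Jc_eq[OF assms i] stat_Pol1[OF assms(2)]
    by (intro antisym INF_greatest) (auto intro: INF_lower2)
  have "(INF \<pi>1\<in>Pol1 G. Jc G \<pi>1 \<pi>2 i) \<le> ereal (Js i)" if "\<pi>2 \<in> Pol2 G" for \<pi>2
    using up[OF that] stat_Pol1[OF assms(2)] by (auto intro: INF_lower2)
  then have "(SUP \<pi>2\<in>Pol2 G. INF \<pi>1\<in>Pol1 G. Jc G \<pi>1 \<pi>2 i) = ereal (Js i)"
    using inf stat_Pol2[OF assms(3)] by (intro antisym SUP_least) (auto intro: SUP_upper2)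
  with inf show "(INF \<pi>1\<in>Pol1 G. Jc G \<pi>1 (stat \<nu>) i) = (SUP \<pi>2\<in>Pol2 G. INF \<pi>1\<in>Pol1 G. Jc G \<pi>1 \<pi>2 i)"
    by simp
qed

lemma prolonging_infinite:
  assumes "ssp_model_assumption G" "\<mu> \<in> SR1 G" "\<nu> \<in> SR2 G" "prolonging G (stat \<mu>) (stat \<nu>)"
  obtains i where "i \<in> St G" "Jc G (stat \<mu>) (stat \<nu>) i = \<infinity> \<or> Jc G (stat \<mu>) (stat \<nu>) i = -\<infinity>"
  using assms unfolding ssp_model_assumption_def by blast

lemma guarantees_value_not_prolonging:
  assumes "ssp_model_assumption G" "guarantees_value G \<mu> \<nu> Js" "\<mu> \<in> SR1 G" "\<nu> \<in> SR2 G"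
  shows "\<not> prolonging G (stat \<mu>) (stat \<nu>)"
  using prolonging_infinite[OF assms(1,3,4)] guarantees_value_Jc_eq[OF assms(2-4)] by force

lemma guarantees_value_ess_proper1:
  assumes "ssp_model_assumption G" "guarantees_value G \<mu> \<nu> Js" "\<mu> \<in> SR1 G" "\<nu> \<in> SR2 G"
  shows "ess_proper1 G \<mu>"
  unfolding ess_proper1_def
proof (intro conjI ballI impI)
  show "\<exists>\<nu>\<in>SR2 G. \<not> prolonging G (stat \<mu>) (stat \<nu>)"
    using assms(4) guarantees_value_not_prolonging[OF assms] by blast
  fix \<nu>' assume \<nu>': "\<nu>' \<in> SR2 G" and "prolonging G (stat \<mu>) (stat \<nu>')"
  then obtain i where i: "i \<in> St G" "Jc G (stat \<mu>) (stat \<nu>') i = \<infinity> \<or> Jc G (stat \<mu>) (stat \<nu>') i = -\<infinity>"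
    using prolonging_infinite[OF assms(1,3)] by blast
  moreover have "Jc G (stat \<mu>) (stat \<nu>') i \<le> ereal (Js i)"
    by (rule guarantees_valueD(1)[OF assms(2) i(1) stat_Pol2[OF \<nu>']])
  ultimately show "\<exists>i\<in>St G. Jc G (stat \<mu>) (stat \<nu>') i = -\<infinity>" by auto
qed (rule assms(3))

lemma guarantees_value_ess_proper2:
  assumes "ssp_model_assumption G" "guarantees_value G \<mu> \<nu> Js" "\<mu> \<in> SR1 G" "\<nu> \<in> SR2 G"
  shows "ess_proper2 G \<nu>"
  unfolding ess_proper2_def
proof (intro conjI ballI impI)
  show "\<exists>\<mu>\<in>SR1 G. \<not> prolonging G (stat \<mu>) (stat \<nu>)"
    using assms(3) guarantees_value_not_prolonging[OF assms] by blast
  fix \<mu>' assume \<mu>': "\<mu>' \<in> SR1 G" and "prolonging G (stat \<mu>') (stat \<nu>)"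
  then obtain i where i: "i \<in> St G" "Jc G (stat \<mu>') (stat \<nu>) i = \<infinity> \<or> Jc G (stat \<mu>') (stat \<nu>) i = -\<infinity>"
    using prolonging_infinite[OF assms(1) _ assms(4)] by blast
  moreover have "ereal (Js i) \<le> Jc G (stat \<mu>') (stat \<nu>) i"
    by (rule guarantees_valueD(2)[OF assms(2) i(1) stat_Pol1[OF \<mu>']])
  ultimately show "\<exists>i\<in>St G. Jc G (stat \<mu>') (stat \<nu>) i = \<infinity>" by auto
qed (rule assms(4))

lemma prolonging_responses_minf_if_not_pinf:
  assumes "ssp_model_assumption G" "\<mu> \<in> SR1 G"
    and "\<And>\<nu> i. \<nu> \<in> SR2 G \<Longrightarrow> i \<in> St G \<Longrightarrow> Jc G (stat \<mu>) (stat \<nu>) i \<noteq> \<infinity>"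
  shows "prolonging_responses_minf G \<mu>"
  unfolding prolonging_responses_minf_def
  using prolonging_infinite[OF assms(1,2)] assms(3) by metis

lemma prolonging_responses_pinf_if_not_minf:
  assumes "ssp_model_assumption G" "\<nu> \<in> SR2 G"
    and "\<And>\<mu> i. \<mu> \<in> SR1 G \<Longrightarrow> i \<in> St G \<Longrightarrow> Jc G (stat \<mu>) (stat \<nu>) i \<noteq> -\<infinity>"
  shows "prolonging_responses_pinf G \<nu>"
  unfolding prolonging_responses_pinf_def
  using prolonging_infinite[OF assms(1) _ assms(2)] assms(3) by metis

lemma prolonging_responses_minf_if_Tmu_super:
  assumes "wf_game G" "ssp_model_assumption G" "\<mu> \<in> SR1 G" "\<And>i. i \<in> St G \<Longrightarrow> Tmu G \<mu> J i \<le> J i"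
  shows "prolonging_responses_minf G \<mu>"
proof (rule prolonging_responses_minf_if_not_pinf[OF assms(2,3)])
  show "Jc G (stat \<mu>) (stat \<nu>) i \<noteq> \<infinity>" if "\<nu> \<in> SR2 G" "i \<in> St G" for \<nu> i
    by (rule Jc_stat_ne_pinf[OF assms(1,3) that(1) _ that(2), where J=J]) (simp add: assms(4))
qed

lemma prolonging_responses_pinf_if_Tnu_sub:
  assumes "wf_game G" "ssp_model_assumption G" "\<nu> \<in> SR2 G" "\<And>i. i \<in> St G \<Longrightarrow> J i \<le> Tnu G \<nu> J i"
  shows "prolonging_responses_pinf G \<nu>"
proof (rule prolonging_responses_pinf_if_not_minf[OF assms(2,3)])
  show "Jc G (stat \<mu>) (stat \<nu>) i \<noteq> -\<infinity>" if "\<mu> \<in> SR1 G" "i \<in> St G" for \<mu> i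
    by (rule Jc_stat_ne_minf[OF assms(1) that(1) assms(3) _ that(2), where J=J]) (simp add: assms(4))
qed

lemma Jc_le_Tmu_fixpoint:
  assumes "wf_game G" "\<mu> \<in> SR1 G" "prolonging_responses_minf G \<mu>"
    "\<And>i. i \<in> St G \<Longrightarrow> Tmu G \<mu> Js i = Js i" "\<pi>2 \<in> Pol2 G" "i \<in> St G"
  shows "Jc G (stat \<mu>) \<pi>2 i \<le> ereal (Js i)"
  by (rule Jc_le_if_tendsto[OF costN_le_funpow_Tmu[OF assms(1,2,5,6)]])
    (rule funpow_Tmu_tendsto[OF assms(1-3) _ assms(6)], rule assms(4))

lemma Jc_ge_Tnu_fixpoint:
  assumes "wf_game G" "\<nu> \<in> SR2 G" "prolonging_responses_pinf G \<nu>"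
    "\<And>i. i \<in> St G \<Longrightarrow> Tnu G \<nu> Js i = Js i" "\<pi>1 \<in> Pol1 G" "i \<in> St G"
  shows "ereal (Js i) \<le> Jc G \<pi>1 (stat \<nu>) i"
  by (rule Jc_ge_if_tendsto[OF funpow_Tnu_le_costN[OF assms(1,2,5,6)]])
    (rule funpow_Tnu_tendsto[OF assms(1-3) _ assms(6)], rule assms(4))

lemma guarantees_value_if_fixpoint:
  assumes "wf_game G" "ssp_model_assumption G" "\<mu> \<in> SR1 G" "\<nu> \<in> SR2 G"
    and \<mu>_fix: "\<And>i. i \<in> St G \<Longrightarrow> Tmu G \<mu> Js i = Js i"
    and \<nu>_fix: "\<And>i. i \<in> St G \<Longrightarrow> Tnu G \<nu> Js i = Js i"
  shows "guarantees_value G \<mu> \<nu> Js"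
proof -
  have "prolonging_responses_minf G \<mu>"
    by (rule prolonging_responses_minf_if_Tmu_super[OF assms(1-3), where J=Js]) (simp add: \<mu>_fix)
  moreover have "prolonging_responses_pinf G \<nu>"
    by (rule prolonging_responses_pinf_if_Tnu_sub[OF assms(1,2,4), where J=Js]) (simp add: \<nu>_fix)
  ultimately show ?thesis
    unfolding guarantees_value_def
    using Jc_le_Tmu_fixpoint[OF assms(1,3) _ \<mu>_fix] Jc_ge_Tnu_fixpoint[OF assms(1,4) _ \<nu>_fix] by blast
qed

lemma Top_fixpoint_unique:
  assumes wf: "wf_game G" "ssp_model_assumption G" and \<mu>: "\<mu> \<in> SR1 G" and \<nu>: "\<nu> \<in> SR2 G"
    and \<mu>_fix: "\<And>i. i \<in> St G \<Longrightarrow> Tmu G \<mu> Js i = Js i"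
    and \<nu>_fix: "\<And>i. i \<in> St G \<Longrightarrow> Tnu G \<nu> Js i = Js i"
    and J: "\<And>i. i \<in> St G \<Longrightarrow> Top G J i = J i" and i: "i \<in> St G"
  shows "J i = Js i"
proof (rule antisym)
  have "prolonging_responses_minf G \<mu>"
    by (rule prolonging_responses_minf_if_Tmu_super[OF wf \<mu>, where J=Js]) (simp add: \<mu>_fix)
  note tendsto = funpow_Tmu_tendsto[OF wf(1) \<mu> this _ i, of Js J]
  have "J j \<le> Tmu G \<mu> J j" if "j \<in> St G" for j
    using Top_le_Tmu[OF wf(1) that \<mu>, of J] J[OF that] by simp
  then have "J i \<le> (Tmu G \<mu> ^^ k) J i" for k by (rule funpow_ge_self[OF Tmu_monotone[OF wf(1) \<mu>] _ i])
  then show "J i \<le> Js i" using tendsto \<mu>_fix by (intro LIMSEQ_le_const) auto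
next
  have "prolonging_responses_pinf G \<nu>"
    by (rule prolonging_responses_pinf_if_Tnu_sub[OF wf \<nu>, where J=Js]) (simp add: \<nu>_fix)
  note tendsto = funpow_Tnu_tendsto[OF wf(1) \<nu> this _ i, of Js J]
  have "Tnu G \<nu> J j \<le> J j" if "j \<in> St G" for j
    using Tnu_le_Top[OF wf(1) that \<nu>, of J] J[OF that] by simp
  then have "(Tnu G \<nu> ^^ k) J i \<le> J i" for k by (rule funpow_le_self[OF Tnu_monotone[OF wf(1) \<nu>] _ i])
  then show "Js i \<le> J i" using tendsto \<nu>_fix by (intro LIMSEQ_le_const2) auto
qed

lemma terminating_pair_cost:
  assumes wf: "wf_game G" and \<mu>: "\<mu> \<in> SR1 G" and \<nu>: "\<nu> \<in> SR2 G"
    and "\<not> prolonging G (stat \<mu>) (stat \<nu>)"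
  obtains J where "\<And>i. i \<in> St G \<Longrightarrow> Qval G J i (\<mu> i) (\<nu> i) = J i"
proof -
  let ?J = "expected_total_cost (St G) (stat_kernel G \<mu> \<nu>) (stat_cost G \<mu> \<nu>)"
  have "transient (St G) (stat_kernel G \<mu> \<nu>)" using assms(4) by (simp add: prolonging_stat_iff)
  from transient_expected_total_cost_fixpoint[OF stat_substochastic[OF wf \<mu> \<nu>] this]
  have "Qval G ?J i (\<mu> i) (\<nu> i) = ?J i" if "i \<in> St G" for i
    using that by (simp add: affine_op_stat_kernel[symmetric])
  then show ?thesis by (rule that)
qed

lemma Top_saddle_policies:
  assumes wf: "wf_game G"
  obtains \<mu> \<nu> where "\<mu> \<in> SR1 G" "\<nu> \<in> SR2 G"
    "\<And>i. i \<in> St G \<Longrightarrow> Tmu G \<mu> J i = Top G J i" "\<And>i. i \<in> St G \<Longrightarrow> Tnu G \<nu> J i = Top G J i"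
proof -
  have "\<forall>i. \<exists>\<rho>. i \<in> St G \<longrightarrow> \<rho> \<in> Ubar G i \<and> (\<forall>\<sigma>'\<in>Vbar G i. Qval G J i \<rho> \<sigma>' \<le> Top G J i)"
    using Top_saddle[OF wf] by blast
  then obtain \<mu> where \<mu>: "\<And>i. i \<in> St G \<Longrightarrow> \<mu> i \<in> Ubar G i \<and> (\<forall>\<sigma>'\<in>Vbar G i. Qval G J i (\<mu> i) \<sigma>' \<le> Top G J i)"
    by (metis choice)
  have "\<forall>i. \<exists>\<sigma>. i \<in> St G \<longrightarrow> \<sigma> \<in> Vbar G i \<and> (\<forall>\<rho>'\<in>Ubar G i. Top G J i \<le> Qval G J i \<rho>' \<sigma>)"
    using Top_saddle[OF wf] by blast
  then obtain \<nu> where \<nu>: "\<And>i. i \<in> St G \<Longrightarrow> \<nu> i \<in> Vbar G i \<and> (\<forall>\<rho>'\<in>Ubar G i. Top G J i \<le> Qval G J i \<rho>' (\<nu> i))"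
    by (metis choice)
  have \<mu>_SR1: "\<mu> \<in> SR1 G" and \<nu>_SR2: "\<nu> \<in> SR2 G"
    using \<mu> \<nu> by (auto simp: SR1_def SR2_def Ubar_def Vbar_def)
  show ?thesis
  proof (rule that[OF \<mu>_SR1 \<nu>_SR2])
    fix i assume i: "i \<in> St G"
    obtain v where "v \<in> Vc G i" "Tmu G \<mu> J i = Qval G J i (\<mu> i) (return_pmf v)"
      using Tmu_attained[OF wf i] by blast
    then have "Tmu G \<mu> J i \<le> Top G J i" using \<mu>[OF i] by (simp add: Vbar_def)
    then show "Tmu G \<mu> J i = Top G J i" using Top_le_Tmu[OF wf i \<mu>_SR1] by (rule antisym)
    obtain u where "u \<in> Uc G i" "Tnu G \<nu> J i = Qval G J i (return_pmf u) (\<nu> i)"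
      using Tnu_attained[OF wf i] by blast
    then have "Top G J i \<le> Tnu G \<nu> J i" using \<nu>[OF i] by (simp add: Ubar_def)
    then show "Tnu G \<nu> J i = Top G J i" using Tnu_le_Top[OF wf i \<nu>_SR2, of J] by linarith
  qed
qed

lemma model_assumption_policies:
  assumes A: "ssp_model_assumption G"
  obtains \<mu> \<nu> where "\<mu> \<in> SR1 G" "\<nu> \<in> SR2 G"
    "prolonging_responses_minf G \<mu>" "prolonging_responses_pinf G \<nu>" "\<not> prolonging G (stat \<mu>) (stat \<nu>)"
proof -
  obtain \<mu>b where \<mu>b: "\<mu>b \<in> SR1 G" and \<mu>b_finite: "\<forall>\<nu>\<in>SR2 G. \<forall>i\<in>St G. Jc G (stat \<mu>b) (stat \<nu>) i < \<infinity>"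
    using A unfolding ssp_model_assumption_def by blast
  obtain \<nu>b where \<nu>b: "\<nu>b \<in> SR2 G" and \<nu>b_finite: "\<forall>\<mu>\<in>SR1 G. \<forall>i\<in>St G. Jc G (stat \<mu>) (stat \<nu>b) i > -\<infinity>"
    using A unfolding ssp_model_assumption_def by blast
  have H\<mu>: "prolonging_responses_minf G \<mu>b"
    by (rule prolonging_responses_minf_if_not_pinf[OF A \<mu>b]) (use \<mu>b_finite in fastforce)
  have H\<nu>: "prolonging_responses_pinf G \<nu>b"
    by (rule prolonging_responses_pinf_if_not_minf[OF A \<nu>b]) (use \<nu>b_finite in fastforce)
  have "\<not> prolonging G (stat \<mu>b) (stat \<nu>b)"
  proof
    assume "prolonging G (stat \<mu>b) (stat \<nu>b)"
    then obtain i where "i \<in> St G" "Jc G (stat \<mu>b) (stat \<nu>b) i = \<infinity> \<or> Jc G (stat \<mu>b) (stat \<nu>b) i = -\<infinity>"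
      by (rule prolonging_infinite[OF A \<mu>b \<nu>b])
    with \<mu>b_finite \<nu>b_finite \<mu>b \<nu>b show False by fastforce
  qed
  with \<mu>b \<nu>b H\<mu> H\<nu> show ?thesis by (rule that)
qed

text \<open>The pair \<open>(\<mu>b, \<nu>b)\<close> of the model assumption terminates, so its cost \<open>J0\<close> exists.
  Then \<open>Tmu G \<mu>b\<close> has a fixed point \<open>J1 \<ge> J0\<close>, from which value iteration for \<open>Top G\<close>
  decreases, staying above the iterates of \<open>Tnu G \<nu>b\<close>, which converge.\<close>

lemma Top_fixpoint_exists:
  assumes wf: "wf_game G" and A: "ssp_model_assumption G"
  obtains Js where "\<And>i. i \<in> St G \<Longrightarrow> Top G Js i = Js i"
proof -
  obtain \<mu>b \<nu>b where \<mu>b: "\<mu>b \<in> SR1 G" and \<nu>b: "\<nu>b \<in> SR2 G"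
    and H\<mu>: "prolonging_responses_minf G \<mu>b" and H\<nu>: "prolonging_responses_pinf G \<nu>b"
    and "\<not> prolonging G (stat \<mu>b) (stat \<nu>b)"
    using model_assumption_policies[OF A] by blast
  then obtain J0 where J0: "\<And>i. i \<in> St G \<Longrightarrow> Qval G J0 i (\<mu>b i) (\<nu>b i) = J0 i"
    using terminating_pair_cost[OF wf \<mu>b \<nu>b] by blast
  have "J0 i \<le> Tmu G \<mu>b J0 i" if "i \<in> St G" for i
    using Qval_le_Tmu[OF wf that SR2_Vbar[OF \<nu>b that], of J0 \<mu>b] J0[OF that] by simp
  then obtain J1 where J1: "\<And>i. i \<in> St G \<Longrightarrow> Tmu G \<mu>b J1 i = J1 i"
    using Tmu_fixpoint_exists[OF wf \<mu>b H\<mu>] by blast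
  have "Tnu G \<nu>b J0 i \<le> J0 i" if "i \<in> St G" for i
    using Tnu_le_Qval[OF wf that SR1_Ubar[OF \<mu>b that], of \<nu>b J0] J0[OF that] by simp
  then obtain J2 where J2: "\<And>i. i \<in> St G \<Longrightarrow> Tnu G \<nu>b J2 i = J2 i"
    using Tnu_fixpoint_exists[OF wf \<nu>b H\<nu>] by blast
  define B where "B i = (INF k. (Tnu G \<nu>b ^^ k) J1 i)" for i
  have bounded: "B i \<le> (Top G ^^ k) J1 i" if i: "i \<in> St G" for k i
  proof -
    have "convergent (\<lambda>k. (Tnu G \<nu>b ^^ k) J1 i)"
      using funpow_Tnu_tendsto[OF wf \<nu>b H\<nu> J2 i] by (auto simp: convergent_def)
    then have "bdd_below (range (\<lambda>k. (Tnu G \<nu>b ^^ k) J1 i))"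
      by (intro bounded_imp_bdd_below convergent_imp_bounded) (simp add: convergent_LIMSEQ_iff)
    then have "B i \<le> (Tnu G \<nu>b ^^ k) J1 i" unfolding B_def by (intro cINF_lower) auto
    also have "\<dots> \<le> (Top G ^^ k) J1 i"
      by (rule funpow_le_funpow[OF Top_monotone[OF wf] _ i]) (rule Tnu_le_Top[OF wf _ \<nu>b])
    finally show ?thesis .
  qed
  have decreasing: "Top G J1 i \<le> J1 i" if "i \<in> St G" for i
    using Top_le_Tmu[OF wf that \<mu>b, of J1] J1[OF that] by simp
  obtain Js where "\<And>i. i \<in> St G \<Longrightarrow> Top G Js i = Js i"
    using funpow_tendsto_fixpoint_if_decreasing[where F="Top G" and J=J1 and B=B,
        OF St_finite Top_monotone[OF wf] Top_nonexpansive[OF wf] decreasing bounded] by blast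
  then show ?thesis by (rule that)
qed

lemma greedy_pair_optimal:
  assumes "wf_game G" "ssp_model_assumption G" "\<And>i. i \<in> St G \<Longrightarrow> Top G Js i = Js i"
    and "\<mu> \<in> SR1 G" "\<nu> \<in> SR2 G"
    and "\<forall>i\<in>St G. Tmu G \<mu> Js i = Top G Js i" "\<forall>i\<in>St G. Tnu G \<nu> Js i = Top G Js i"
  shows "optimal1 G (stat \<mu>) \<and> optimal2 G (stat \<nu>) \<and> ess_proper1 G \<mu> \<and> ess_proper2 G \<nu> \<and>
    \<not> prolonging G (stat \<mu>) (stat \<nu>) \<and> equilibrium G (stat \<mu>) (stat \<nu>) \<and>
    (\<forall>i\<in>St G. Jc G (stat \<mu>) (stat \<nu>) i = ereal (Js i))"
proof -
  have g: "guarantees_value G \<mu> \<nu> Js"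
    using guarantees_value_if_fixpoint[OF assms(1,2,4,5)] assms(3,6,7) by simp
  show ?thesis
    using guarantees_value_optimal1[OF g assms(4,5)] guarantees_value_optimal2[OF g assms(4,5)]
      guarantees_value_ess_proper1[OF assms(2) g assms(4,5)] guarantees_value_ess_proper2[OF assms(2) g assms(4,5)]
      guarantees_value_not_prolonging[OF assms(2) g assms(4,5)] guarantees_value_equilibrium[OF g assms(4,5)]
      guarantees_value_Jc_eq[OF g assms(4,5)] by blast
qed

theorem proposition3p1:
  fixes G :: "('u,'v) ssp_game"
  assumes "wf_game G"
    and "ssp_model_assumption G"
  shows "\<exists>\<mu>s\<in>SR1 G. \<exists>\<nu>s\<in>SR2 G.
           equilibrium G (stat \<mu>s) (stat \<nu>s) \<and>
           (\<exists>Js :: nat \<Rightarrow> real.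
              (\<forall>i\<in>St G. Jc G (stat \<mu>s) (stat \<nu>s) i = ereal (Js i)) \<and>
              (\<forall>i\<in>St G. Js i = Top G Js i) \<and>
              (\<forall>J :: nat \<Rightarrow> real. (\<forall>i\<in>St G. J i = Top G J i) \<longrightarrow> (\<forall>i\<in>St G. J i = Js i)) \<and>
              (\<forall>\<mu>\<in>SR1 G. \<forall>\<nu>\<in>SR2 G.
                 (\<forall>i\<in>St G. Tmu G \<mu> Js i = Top G Js i) \<and>
                 (\<forall>i\<in>St G. Tnu G \<nu> Js i = Top G Js i) \<longrightarrow>
                   optimal1 G (stat \<mu>) \<and> optimal2 G (stat \<nu>) \<and>
                   ess_proper1 G \<mu> \<and> ess_proper2 G \<nu> \<and>
                   \<not> prolonging G (stat \<mu>) (stat \<nu>) \<and>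
                   equilibrium G (stat \<mu>) (stat \<nu>)))"
proof -
  obtain Js where Js: "\<And>i. i \<in> St G \<Longrightarrow> Top G Js i = Js i"
    using Top_fixpoint_exists[OF assms] by blast
  obtain \<mu>s \<nu>s where \<mu>s: "\<mu>s \<in> SR1 G" "\<And>i. i \<in> St G \<Longrightarrow> Tmu G \<mu>s Js i = Top G Js i"
    and \<nu>s: "\<nu>s \<in> SR2 G" "\<And>i. i \<in> St G \<Longrightarrow> Tnu G \<nu>s Js i = Top G Js i"
    using Top_saddle_policies[OF assms(1), of Js] by metis
  have greedy: "optimal1 G (stat \<mu>) \<and> optimal2 G (stat \<nu>) \<and> ess_proper1 G \<mu> \<and> ess_proper2 G \<nu> \<and>
      \<not> prolonging G (stat \<mu>) (stat \<nu>) \<and> equilibrium G (stat \<mu>) (stat \<nu>) \<and>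
      (\<forall>i\<in>St G. Jc G (stat \<mu>) (stat \<nu>) i = ereal (Js i))"
    if "\<mu> \<in> SR1 G" "\<nu> \<in> SR2 G" "\<forall>i\<in>St G. Tmu G \<mu> Js i = Top G Js i" "\<forall>i\<in>St G. Tnu G \<nu> Js i = Top G Js i"
    for \<mu> \<nu> by (rule greedy_pair_optimal[OF assms _ that]) (rule Js)
  have unique: "J i = Js i" if J: "\<forall>i\<in>St G. J i = Top G J i" and i: "i \<in> St G" for J i
  proof (rule Top_fixpoint_unique[OF assms \<mu>s(1) \<nu>s(1) _ _ _ i])
    show "Tmu G \<mu>s Js j = Js j" "Tnu G \<nu>s Js j = Js j" if "j \<in> St G" for j
      using \<mu>s(2) \<nu>s(2) Js that by simp_all
    show "Top G J j = J j" if "j \<in> St G" for j using J that by metis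
  qed
  show ?thesis
    using \<mu>s \<nu>s greedy[OF \<mu>s(1) \<nu>s(1)] greedy Js unique by (intro bexI[of _ \<mu>s] bexI[of _ \<nu>s]) auto
qed

end
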